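(* Let $d\in\mathbb N$, $\beta\in(1,\infty)$, $\mathsf Q=(2\beta-1)d+1$, and let $K_r,G^0_r,G^1_r,G^v_r$ be as in the context. For $h\in\mathbb R^d$ and a kernel $J$ let $\Delta_y^{-h}J(s,y,w):=J(s,y-h,w)-J(s,y,w)$. (i) For $\theta\in[1,\infty]$, $s\in(0,1)$, $h\in\mathbb R^d$: $\|\Delta_y^{-h}K_r\|_{\mathrm L^\theta}\lesssim|h|^s\,r^{\mathsf Q(\frac1\theta-1)-\beta s}$ for all $r>0$. (ii) If $s\in(0,\frac13)$, $\beta\in(\frac{1}{1-s},\frac{2}{1+s})$ and $$\theta_0(s)=\frac{\mathsf Q}{\mathsf Q+\beta-2+\beta s},\quad\theta_1(s)=\frac{\mathsf Q}{\mathsf Q-1+\beta s},\quad\theta_v(s)=\frac{\mathsf Q}{\mathsf Q+1-\beta+\beta s},$$ then, uniformly in $\tau>0$ and $h\in\mathbb R^d$, $$\Bigl\|\int_0^\tau\Delta_y^{-h}G^0_r\,\mathrm dr\Bigr\|_{\mathrm L^{\theta_0(s),\infty}}\lesssim|h|^s,\quad\Bigl\|\int_0^\tau\Delta_y^{-h}G^1_r\,\mathrm dr\Bigr\|_{\mathrm L^{\theta_1(s),\infty}}\lesssim|h|^s,\quad\Bigl\|\int_0^\tau\Delta_y^{-h}G^v_r\,\mathrm dr\Bigr\|_{\mathrm L^{\theta_v(s),\infty}}\lesssim|h|^s.$$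
   Context: All $2\times2$ matrices act on $\mathbb R^{2d}$ as their tensor product with $\mathrm{Id}_d$. Let $g_1(r)=r^\beta\sin\log r$, $g_2(r)=r^\beta\cos\log r$, $\mathcal W(r)=\begin{pmatrix}g_1&g_2\\ \dot g_1&\dot g_2\end{pmatrix}(r)$, $\mathcal D_\delta=\mathrm{diag}(\mathrm{Id}_d,\delta\,\mathrm{Id}_d)$, $\mathcal A_{m_0}(r)=\mathcal D_{m_0}^{-1}\mathcal W(r)$ and $\mathcal F_{m_0}(r)=(m_0^{-1}\ddot g_1(r)\ \ m_0^{-1}\ddot g_2(r))\in\mathbb R^{d\times 2d}$ for $m_0\ne0$. Let $c_0:=(-1)^d$. Fix a nonnegative $\psi\in C_c^\infty(\mathbb R^{1+2d})$ with unit mass and support in $(-2,-1)\times B_1(0)\times B_1(0)$; $\nabla_{x,v}\psi$ is its gradient in the last $2d$ variables. For $r>0$ and $(s,y,w)$ with $s\neq0$ (kernels $0$ at $s=0$), with $M:=\mathcal A_{s/r}(r)^{-1}$ and $M_{\cdot;2}$ its second block column: $K_r(s,y,w)=c_0^{-1}r^{-\mathsf Q}(s/r)^d\psi(s/r,M(y,w))$, $G^0_r(s,y,w)=c_0^{-1}(s/r)^{d+1}r^{-\mathsf Q}[\nabla_{x,v}\psi]^T(s/r,M(y,w))M_{\cdot;2}$, $G^1_r(s,y,w)=-c_0^{-1}(s/r)^{d+1}r^{-\mathsf Q}\psi(s/r,M(y,w))$, $G^v_r(s,y,w)=-c_0^{-1}(s/r)^{d}r^{-\mathsf Q}\psi(s/r,M(y,w))\mathcal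 F_{s/r}(r)M(y,w)$. Implicit constants in $\lesssim$ do not depend on $r,\tau,h$. The weak Lebesgue quasinorm is $\|J\|_{\mathrm L^{\theta,\infty}}=\sup_{\lambda>0}\lambda|\{|J|>\lambda\}|^{1/\theta}$. *)

theory Defs
  imports "HOL-Analysis.Analysis" "HOL-Probability.Essential_Supremum"
begin

type_synonym 'n pt = "real \<times> (real^'n) \<times> (real^'n)"

fun iterdd :: "'a::real_normed_vector list \<Rightarrow> ('a \<Rightarrow> real) \<Rightarrow> 'a \<Rightarrow> real" where
  "iterdd [] f = f"
| "iterdd (v # vs) f = (\<lambda>x. frechet_derivative (iterdd vs f) (at x) v)"

definition smooth_fun :: "('a::real_normed_vector \<Rightarrow> real) \<Rightarrow> bool" where
  "smooth_fun f \<longleftrightarrow> (\<forall>vs x. iterdd vs f differentiable (at x))"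

definition grad_x :: "('n::finite pt \<Rightarrow> real) \<Rightarrow> 'n pt \<Rightarrow> real^'n" where
  "grad_x \<psi> p = (\<chi> j. frechet_derivative \<psi> (at p) (0, axis j 1, 0))"

definition grad_v :: "('n::finite pt \<Rightarrow> real) \<Rightarrow> 'n pt \<Rightarrow> real^'n" where
  "grad_v \<psi> p = (\<chi> j. frechet_derivative \<psi> (at p) (0, 0, axis j 1))"

definition g1 :: "real \<Rightarrow> real \<Rightarrow> real" where
  "g1 \<beta> r = r powr \<beta> * sin (ln r)"

definition g2 :: "real \<Rightarrow> real \<Rightarrow> real" where
  "g2 \<beta> r = r powr \<beta> * cos (ln r)"

definition mat2 :: "real \<Rightarrow> real \<Rightarrow> real \<Rightarrow> real \<Rightarrow> real^2^2" where
  "mat2 a b c e = (\<chi> i j. if i = 1 then (if j = 1 then a else b) else (if j = 1 then c else e))"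

definition Wmat :: "real \<Rightarrow> real \<Rightarrow> real^2^2" where
  "Wmat \<beta> r = mat2 (g1 \<beta> r) (g2 \<beta> r) (deriv (g1 \<beta>) r) (deriv (g2 \<beta>) r)"

definition Dmat :: "real \<Rightarrow> real^2^2" where
  "Dmat \<delta> = mat2 1 0 0 \<delta>"

definition Amat :: "real \<Rightarrow> real \<Rightarrow> real \<Rightarrow> real^2^2" where
  "Amat \<beta> m0 r = matrix_inv (Dmat m0) ** Wmat \<beta> r"

definition Mmat :: "real \<Rightarrow> real \<Rightarrow> real \<Rightarrow> real^2^2" where
  "Mmat \<beta> m0 r = matrix_inv (Amat \<beta> m0 r)"

text \<open>Action of a 2x2 matrix (tensored with Id_d) on R^{2d}.\<close>
definition blk_app :: "real^2^2 \<Rightarrow> (real^'n) \<times> (real^'n) \<Rightarrow> (real^'n) \<times> (real^'n)" where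
  "blk_app M z = (M$1$1 *\<^sub>R fst z + M$1$2 *\<^sub>R snd z, M$2$1 *\<^sub>R fst z + M$2$2 *\<^sub>R snd z)"

definition F_app :: "real \<Rightarrow> real \<Rightarrow> real \<Rightarrow> (real^'n) \<times> (real^'n) \<Rightarrow> real^'n" where
  "F_app \<beta> m0 r z = (inverse m0 * deriv (deriv (g1 \<beta>)) r) *\<^sub>R fst z
                   + (inverse m0 * deriv (deriv (g2 \<beta>)) r) *\<^sub>R snd z"

definition Qdim :: "nat \<Rightarrow> real \<Rightarrow> real" where
  "Qdim d \<beta> = (2 * \<beta> - 1) * real d + 1"

definition c0 :: "nat \<Rightarrow> real" where
  "c0 d = (-1) ^ d"

definition Kr :: "('n::finite pt \<Rightarrow> real) \<Rightarrow> real \<Rightarrow> real \<Rightarrow> 'n pt \<Rightarrow> real" where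
  "Kr \<psi> \<beta> r p = (case p of (s, y, w) \<Rightarrow>
     if s = 0 then 0 else
     inverse (c0 CARD('n)) * r powr (- Qdim CARD('n) \<beta>) * (s / r) ^ CARD('n)
       * \<psi> (s / r, blk_app (Mmat \<beta> (s / r) r) (y, w)))"

definition G0r :: "('n::finite pt \<Rightarrow> real) \<Rightarrow> real \<Rightarrow> real \<Rightarrow> 'n pt \<Rightarrow> real^'n" where
  "G0r \<psi> \<beta> r p = (case p of (s, y, w) \<Rightarrow>
     if s = 0 then 0 else
     (let M = Mmat \<beta> (s / r) r; q = (s / r, blk_app M (y, w)) in
     (inverse (c0 CARD('n)) * (s / r) ^ (CARD('n) + 1) * r powr (- Qdim CARD('n) \<beta>))
       *\<^sub>R (M$1$2 *\<^sub>R grad_x \<psi> q + M$2$2 *\<^sub>R grad_v \<psi> q)))"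

definition G1r :: "('n::finite pt \<Rightarrow> real) \<Rightarrow> real \<Rightarrow> real \<Rightarrow> 'n pt \<Rightarrow> real" where
  "G1r \<psi> \<beta> r p = (case p of (s, y, w) \<Rightarrow>
     if s = 0 then 0 else
     - inverse (c0 CARD('n)) * (s / r) ^ (CARD('n) + 1) * r powr (- Qdim CARD('n) \<beta>)
       * \<psi> (s / r, blk_app (Mmat \<beta> (s / r) r) (y, w)))"

definition Gvr :: "('n::finite pt \<Rightarrow> real) \<Rightarrow> real \<Rightarrow> real \<Rightarrow> 'n pt \<Rightarrow> real^'n" where
  "Gvr \<psi> \<beta> r p = (case p of (s, y, w) \<Rightarrow>
     if s = 0 then 0 else
     (let z = blk_app (Mmat \<beta> (s / r) r) (y, w) in
     (- inverse (c0 CARD('n)) * (s / r) ^ CARD('n) * r powr (- Qdim CARD('n) \<beta>)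
       * \<psi> (s / r, z)) *\<^sub>R F_app \<beta> (s / r) r z))"

definition delta_y :: "real^'n \<Rightarrow> ('n pt \<Rightarrow> 'b::ab_group_add) \<Rightarrow> 'n pt \<Rightarrow> 'b" where
  "delta_y h J p = (case p of (s, y, w) \<Rightarrow> J (s, y - h, w) - J (s, y, w))"

definition ennpowr :: "ennreal \<Rightarrow> real \<Rightarrow> ennreal" where
  "ennpowr x p = (if x = \<infinity> then \<infinity> else ennreal (enn2real x powr p))"

definition Lnorm :: "ereal \<Rightarrow> ('a::euclidean_space \<Rightarrow> 'b::real_normed_vector) \<Rightarrow> ennreal" where
  "Lnorm \<theta> f = (if \<theta> = \<infinity> then e2ennreal (esssup lborel (\<lambda>x. ereal (norm (f x))))
     else ennpowr (\<integral>\<^sup>+ x. ennreal (norm (f x) powr real_of_ereal \<theta>) \<partial>lborel) (1 / real_of_ereal \<theta>))"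

definition wLnorm :: "real \<Rightarrow> ('a::euclidean_space \<Rightarrow> 'b::real_normed_vector) \<Rightarrow> ennreal" where
  "wLnorm \<theta> J = (SUP t\<in>{0<..}. ennreal t * ennpowr (emeasure lborel {x. t < norm (J x)}) (1 / \<theta>))"

definition recip :: "ereal \<Rightarrow> real" where
  "recip \<theta> = (if \<theta> = \<infinity> then 0 else 1 / real_of_ereal \<theta>)"

end

theory Submission
  imports Defs
begin

(* Each kernel is a bounded Lipschitz profile (\<psi>, its gradient, or \<psi> times the linear map F)
   evaluated at (\<sigma>/r, M (y, w)), with M = A\<^bsub>\<sigma>/r\<^esub>(r)\<^sup>-\<^sup>1, times an explicit power of r.
   Since \<psi> lives in (-2,-1) \<times> B\<^sub>1 \<times> B\<^sub>1, only times -\<sigma>/2 < r < -\<sigma> contribute, and then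
   (\<sigma>, y, w) lies in a box of measure \<approx> |\<sigma>|\<^sup>Q.  The y-difference moves M (y, w) by M (h, 0),
   of size \<approx> r\<^sup>-\<^sup>\<beta> |h|, so interpolating the sup and Lipschitz bounds of the profile gains
   (r\<^sup>-\<^sup>\<beta> |h|)\<^sup>s.  Part (i) is then sup times measure\<^sup>1\<^sup>/\<^sup>\<theta>.  For part (ii), integrating over
   -\<sigma>/2 < r < -\<sigma> gives a bound |h|\<^sup>s |\<sigma>|\<^sup>-\<^sup>b, and such a function on boxes of measure
   |\<sigma>|\<^sup>Q is in weak L\<^sup>Q\<^sup>/\<^sup>b. *)

section \<open>2\<times>2 block matrices\<close>

lemma mat2_nth [simp]:
  "mat2 a b c e $ 1 $ 1 = a" "mat2 a b c e $ 1 $ 2 = b"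
  "mat2 a b c e $ 2 $ 1 = c" "mat2 a b c e $ 2 $ 2 = e"
  by (simp_all add: mat2_def)

lemma mat2_eq_iff: "mat2 a b c e = mat2 a' b' c' e' \<longleftrightarrow> a = a' \<and> b = b' \<and> c = c' \<and> e = e'"
  by (metis mat2_nth)

lemma mat2_mult:
  "mat2 a b c e ** mat2 a' b' c' e' = mat2 (a*a' + b*c') (a*b' + b*e') (c*a' + e*c') (c*b' + e*e')"
  by (simp add: matrix_matrix_mult_def vec_eq_iff forall_2 sum_2 mat2_def)

lemma mat_1_eq_mat2: "mat 1 = mat2 1 0 0 1"
  by (simp add: vec_eq_iff forall_2 mat2_def mat_def)

lemma matrix_inv_eqI:
  fixes A :: "'a::semiring_1^'n^'n"
  assumes "A ** B = mat 1" "B ** A = mat 1"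
  shows "matrix_inv A = B"
proof -
  let ?B' = "matrix_inv A"
  have "A ** ?B' = mat 1 \<and> ?B' ** A = mat 1"
    unfolding matrix_inv_def using assms by (rule someI[of _ B, OF conjI])
  then have "?B' = ?B' ** (A ** B)" "?B' ** A = mat 1" using assms by (simp_all add: matrix_mul_rid)
  then show ?thesis by (simp add: matrix_mul_assoc matrix_mul_lid)
qed

lemma mat2_mult_adjugate:
  fixes a b c e :: real
  defines "\<Delta> \<equiv> a*e - b*c"
  assumes "\<Delta> \<noteq> 0"
  shows "mat2 a b c e ** mat2 (e/\<Delta>) (-b/\<Delta>) (-c/\<Delta>) (a/\<Delta>) = mat 1"
  using assms(2) unfolding \<Delta>_def
  by (simp add: mat2_mult mat_1_eq_mat2 mat2_eq_iff add_divide_distrib[symmetric]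
      diff_divide_distrib[symmetric] algebra_simps)

lemma matrix_inv_mat2:
  fixes a b c e :: real
  defines "\<Delta> \<equiv> a*e - b*c"
  assumes "\<Delta> \<noteq> 0"
  shows "matrix_inv (mat2 a b c e) = mat2 (e/\<Delta>) (-b/\<Delta>) (-c/\<Delta>) (a/\<Delta>)"
  using assms(2) unfolding \<Delta>_def
  by (intro matrix_inv_eqI mat2_mult_adjugate)
     (simp_all add: mat2_mult mat_1_eq_mat2 mat2_eq_iff add_divide_distrib[symmetric]
       diff_divide_distrib[symmetric] algebra_simps)

lemma blk_app_mat2 [simp]: "blk_app (mat2 a b c e) (y, w) = (a *\<^sub>R y + b *\<^sub>R w, c *\<^sub>R y + e *\<^sub>R w)"
  by (simp add: blk_app_def)

lemma blk_app_mult: "blk_app (A ** B) z = blk_app A (blk_app B z)"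
  by (simp add: blk_app_def matrix_matrix_mult_def sum_2 algebra_simps)

lemma blk_app_mat_1 [simp]: "blk_app (mat 1) z = z"
  by (simp add: mat_1_eq_mat2 blk_app_def)

section \<open>The functions \<open>g\<^sub>1\<close>, \<open>g\<^sub>2\<close> and the matrix \<open>M\<close>\<close>

definition dg1 :: "real \<Rightarrow> real \<Rightarrow> real" where
  "dg1 \<beta> r = r powr (\<beta> - 1) * (\<beta> * sin (ln r) + cos (ln r))"

definition dg2 :: "real \<Rightarrow> real \<Rightarrow> real" where
  "dg2 \<beta> r = r powr (\<beta> - 1) * (\<beta> * cos (ln r) - sin (ln r))"

definition ddg1 :: "real \<Rightarrow> real \<Rightarrow> real" where
  "ddg1 \<beta> r = r powr (\<beta> - 2) * ((\<beta> * (\<beta> - 1) - 1) * sin (ln r) + (2 * \<beta> - 1) * cos (ln r))"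

definition ddg2 :: "real \<Rightarrow> real \<Rightarrow> real" where
  "ddg2 \<beta> r = r powr (\<beta> - 2) * ((1 - 2 * \<beta>) * sin (ln r) + (\<beta> * (\<beta> - 1) - 1) * cos (ln r))"

lemma has_real_derivative_g1: "0 < r \<Longrightarrow> (g1 \<beta> has_real_derivative dg1 \<beta> r) (at r)"
  unfolding g1_def[abs_def] dg1_def
  by (rule derivative_eq_intros refl | simp)+ (simp add: powr_diff field_simps)

lemma has_real_derivative_g2: "0 < r \<Longrightarrow> (g2 \<beta> has_real_derivative dg2 \<beta> r) (at r)"
  unfolding g2_def[abs_def] dg2_def
  by (rule derivative_eq_intros refl | simp)+ (simp add: powr_diff field_simps)

lemma has_real_derivative_dg1: "0 < r \<Longrightarrow> (dg1 \<beta> has_real_derivative ddg1 \<beta> r) (at r)"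
  unfolding dg1_def[abs_def] ddg1_def
  by (rule derivative_eq_intros refl | simp)+ (simp add: powr_diff field_simps; algebra)

lemma has_real_derivative_dg2: "0 < r \<Longrightarrow> (dg2 \<beta> has_real_derivative ddg2 \<beta> r) (at r)"
  unfolding dg2_def[abs_def] ddg2_def
  by (rule derivative_eq_intros refl | simp)+ (simp add: powr_diff field_simps; algebra)

lemma deriv_deriv_eqI:
  assumes "open S" "r \<in> S"
    and "\<And>x. x \<in> S \<Longrightarrow> (f has_real_derivative f' x) (at x)"
    and "\<And>x. x \<in> S \<Longrightarrow> (f' has_real_derivative f'' x) (at x)"
  shows "deriv (deriv f) r = f'' r"
proof -
  have "\<forall>\<^sub>F x in nhds r. deriv f x = f' x"
    using eventually_nhds_in_open[OF assms(1,2)] by eventually_elim (use assms(3) DERIV_imp_deriv in blast)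
  then have "deriv (deriv f) r = deriv f' r" by (rule deriv_cong_ev) simp
  then show ?thesis using assms(2,4) DERIV_imp_deriv by metis
qed

lemma deriv_g1: "0 < r \<Longrightarrow> deriv (g1 \<beta>) r = dg1 \<beta> r"
  by (rule DERIV_imp_deriv[OF has_real_derivative_g1])

lemma deriv_g2: "0 < r \<Longrightarrow> deriv (g2 \<beta>) r = dg2 \<beta> r"
  by (rule DERIV_imp_deriv[OF has_real_derivative_g2])

lemma deriv_deriv_g1: "0 < r \<Longrightarrow> deriv (deriv (g1 \<beta>)) r = ddg1 \<beta> r"
  by (rule deriv_deriv_eqI[of "{0<..}"]) (auto intro: has_real_derivative_g1 has_real_derivative_dg1)

lemma deriv_deriv_g2: "0 < r \<Longrightarrow> deriv (deriv (g2 \<beta>)) r = ddg2 \<beta> r"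
  by (rule deriv_deriv_eqI[of "{0<..}"]) (auto intro: has_real_derivative_g2 has_real_derivative_dg2)

lemma wronskian_g1_g2: "0 < r \<Longrightarrow> g1 \<beta> r * dg2 \<beta> r - g2 \<beta> r * dg1 \<beta> r = - (r powr (2*\<beta> - 1))"
proof -
  assume "0 < r"
  have "g1 \<beta> r * dg2 \<beta> r - g2 \<beta> r * dg1 \<beta> r
      = - (r powr \<beta> * r powr (\<beta> - 1)) * ((sin (ln r))\<^sup>2 + (cos (ln r))\<^sup>2)"
    unfolding g1_def g2_def dg1_def dg2_def by algebra
  also have "\<dots> = - (r powr (2*\<beta> - 1))"
    by (simp add: powr_add[symmetric])
  finally show ?thesis .
qed

lemma abs_lincomb_sin_cos_le:
  fixes a b x :: real
  shows "\<bar>a * sin x + b * cos x\<bar> \<le> \<bar>a\<bar> + \<bar>b\<bar>"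
proof -
  have "\<bar>a * sin x\<bar> \<le> \<bar>a\<bar>" "\<bar>b * cos x\<bar> \<le> \<bar>b\<bar>"
    using abs_sin_le_one[of x] abs_cos_le_one[of x] by (simp_all add: abs_mult mult_left_le)
  then show ?thesis by linarith
qed

lemma abs_g1_le: "\<bar>g1 \<beta> r\<bar> \<le> r powr \<beta>"
  and abs_g2_le: "\<bar>g2 \<beta> r\<bar> \<le> r powr \<beta>"
  by (simp_all add: g1_def g2_def abs_mult mult_left_le)

lemma abs_dg1_le: "0 \<le> \<beta> \<Longrightarrow> \<bar>dg1 \<beta> r\<bar> \<le> (\<beta> + 1) * r powr (\<beta> - 1)"
  and abs_dg2_le: "0 \<le> \<beta> \<Longrightarrow> \<bar>dg2 \<beta> r\<bar> \<le> (\<beta> + 1) * r powr (\<beta> - 1)"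
  using abs_lincomb_sin_cos_le[of \<beta> "ln r" 1] abs_lincomb_sin_cos_le[of "-1" "ln r" \<beta>]
  by (auto simp: dg1_def dg2_def abs_mult mult.commute[of "\<beta> + 1"] intro!: mult_left_mono)

lemma abs_ddg1_le: "1 \<le> \<beta> \<Longrightarrow> \<bar>ddg1 \<beta> r\<bar> \<le> (\<beta> + 1)\<^sup>2 * r powr (\<beta> - 2)"
  and abs_ddg2_le: "1 \<le> \<beta> \<Longrightarrow> \<bar>ddg2 \<beta> r\<bar> \<le> (\<beta> + 1)\<^sup>2 * r powr (\<beta> - 2)"
proof -
  assume "1 \<le> \<beta>"
  moreover have "\<beta> \<le> \<beta> * \<beta>"
    using \<open>1 \<le> \<beta>\<close> mult_right_mono[of 1 \<beta> \<beta>] by simp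
  ultimately have coeffs: "\<bar>\<beta> * (\<beta> - 1) - 1\<bar> + \<bar>2 * \<beta> - 1\<bar> \<le> (\<beta> + 1)\<^sup>2"
    by (simp add: abs_le_iff power2_eq_square algebra_simps; linarith)
  have "\<bar>(\<beta> * (\<beta> - 1) - 1) * sin (ln r) + (2 * \<beta> - 1) * cos (ln r)\<bar> \<le> (\<beta> + 1)\<^sup>2"
    using abs_lincomb_sin_cos_le coeffs by (rule order_trans)
  then show "\<bar>ddg1 \<beta> r\<bar> \<le> (\<beta> + 1)\<^sup>2 * r powr (\<beta> - 2)"
    by (simp add: ddg1_def abs_mult mult.commute[of "(\<beta> + 1)\<^sup>2"] mult_left_mono)
  have "\<bar>(1 - 2 * \<beta>) * sin (ln r) + (\<beta> * (\<beta> - 1) - 1) * cos (ln r)\<bar> \<le> (\<beta> + 1)\<^sup>2"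
    using abs_lincomb_sin_cos_le[of "1 - 2 * \<beta>" "ln r" "\<beta> * (\<beta> - 1) - 1"] coeffs
      abs_minus_commute[of 1 "2 * \<beta>"] by linarith
  then show "\<bar>ddg2 \<beta> r\<bar> \<le> (\<beta> + 1)\<^sup>2 * r powr (\<beta> - 2)"
    by (simp add: ddg2_def abs_mult mult.commute[of "(\<beta> + 1)\<^sup>2"] mult_left_mono)
qed

lemma Amat_eq:
  assumes "0 < r" "t \<noteq> 0"
  shows "Amat \<beta> t r = mat2 (g1 \<beta> r) (g2 \<beta> r) (dg1 \<beta> r / t) (dg2 \<beta> r / t)"
proof -
  have "matrix_inv (Dmat t) = mat2 1 0 0 (1/t)"
    using matrix_inv_mat2[of 1 t 0 0] assms(2) by (simp add: Dmat_def)
  then show ?thesis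
    using assms(1) by (simp add: Amat_def Wmat_def deriv_g1 deriv_g2 mat2_mult)
qed

lemma det_Amat:
  assumes "0 < r" "t \<noteq> 0"
  shows "g1 \<beta> r * (dg2 \<beta> r / t) - g2 \<beta> r * (dg1 \<beta> r / t) = - (r powr (2*\<beta> - 1)) / t"
  using wronskian_g1_g2[OF assms(1), of \<beta>] by (simp add: diff_divide_distrib[symmetric])

lemma det_Amat_nonzero:
  assumes "0 < r" "t \<noteq> 0"
  shows "g1 \<beta> r * (dg2 \<beta> r / t) - g2 \<beta> r * (dg1 \<beta> r / t) \<noteq> 0"
  using det_Amat[OF assms, of \<beta>] assms by simp

lemma Mmat_eq:
  assumes "0 < r" "t \<noteq> 0"
  shows "Mmat \<beta> t r = mat2 (- dg2 \<beta> r / r powr (2*\<beta> - 1)) (t * g2 \<beta> r / r powr (2*\<beta> - 1))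
                            (dg1 \<beta> r / r powr (2*\<beta> - 1)) (- t * g1 \<beta> r / r powr (2*\<beta> - 1))"
  using assms
  unfolding Mmat_def Amat_eq[OF assms] matrix_inv_mat2[OF det_Amat_nonzero[OF assms]] det_Amat[OF assms]
  by (simp add: mat2_eq_iff field_simps)

lemma Amat_mult_Mmat:
  assumes "0 < r" "t \<noteq> 0"
  shows "Amat \<beta> t r ** Mmat \<beta> t r = mat 1"
  unfolding Mmat_def Amat_eq[OF assms] matrix_inv_mat2[OF det_Amat_nonzero[OF assms]]
  by (rule mat2_mult_adjugate[OF det_Amat_nonzero[OF assms]])

lemma abs_Mmat_le:
  assumes "0 < r" "0 \<le> \<beta>" "-2 < t" "t < -1"
  shows "\<bar>Mmat \<beta> t r $ 1 $ 1\<bar> \<le> (\<beta> + 1) * r powr (- \<beta>)"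
    and "\<bar>Mmat \<beta> t r $ 2 $ 1\<bar> \<le> (\<beta> + 1) * r powr (- \<beta>)"
    and "\<bar>Mmat \<beta> t r $ 1 $ 2\<bar> \<le> 2 * r powr (1 - \<beta>)"
    and "\<bar>Mmat \<beta> t r $ 2 $ 2\<bar> \<le> 2 * r powr (1 - \<beta>)"
proof -
  let ?P = "r powr (2*\<beta> - 1)"
  have P: "0 < ?P" using assms(1) by simp
  have quot: "r powr (\<beta> - 1) / ?P = r powr (- \<beta>)" "r powr \<beta> / ?P = r powr (1 - \<beta>)"
    by (simp_all add: powr_diff[symmetric])
  have t: "\<bar>t\<bar> \<le> 2" "t \<noteq> 0" using assms(3,4) by auto
  have M: "Mmat \<beta> t r = mat2 (- dg2 \<beta> r / ?P) (t * g2 \<beta> r / ?P) (dg1 \<beta> r / ?P) (- t * g1 \<beta> r / ?P)"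
    by (rule Mmat_eq[OF assms(1) t(2)])
  show "\<bar>Mmat \<beta> t r $ 1 $ 1\<bar> \<le> (\<beta> + 1) * r powr (- \<beta>)"
    using divide_right_mono[OF abs_dg2_le[OF assms(2)], of ?P r] P
    by (simp add: M abs_div quot(1)[symmetric])
  show "\<bar>Mmat \<beta> t r $ 2 $ 1\<bar> \<le> (\<beta> + 1) * r powr (- \<beta>)"
    using divide_right_mono[OF abs_dg1_le[OF assms(2)], of ?P r] P
    by (simp add: M abs_div quot(1)[symmetric])
  have "\<bar>t\<bar> * \<bar>g2 \<beta> r\<bar> \<le> 2 * r powr \<beta>" "\<bar>t\<bar> * \<bar>g1 \<beta> r\<bar> \<le> 2 * r powr \<beta>"
    using t(1) abs_g1_le abs_g2_le by (intro mult_mono; simp)+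
  then show "\<bar>Mmat \<beta> t r $ 1 $ 2\<bar> \<le> 2 * r powr (1 - \<beta>)" "\<bar>Mmat \<beta> t r $ 2 $ 2\<bar> \<le> 2 * r powr (1 - \<beta>)"
    using P by (simp_all add: M abs_div abs_mult quot(2)[symmetric] divide_right_mono)
qed

lemma norm_blk_app_Mmat_shift_le:
  assumes "0 < r" "0 \<le> \<beta>" "-2 < t" "t < -1"
  shows "norm (blk_app (Mmat \<beta> t r) (y - h, w) - blk_app (Mmat \<beta> t r) (y, w))
           \<le> 2 * (\<beta> + 1) * r powr (- \<beta>) * norm h"
proof -
  let ?M = "Mmat \<beta> t r"
  have "blk_app ?M (y - h, w) - blk_app ?M (y, w) = (- (?M $ 1 $ 1 *\<^sub>R h), - (?M $ 2 $ 1 *\<^sub>R h))"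
    by (simp add: blk_app_def algebra_simps)
  then have "norm (blk_app ?M (y - h, w) - blk_app ?M (y, w)) \<le> (\<bar>?M $ 1 $ 1\<bar> + \<bar>?M $ 2 $ 1\<bar>) * norm h"
    using norm_Pair_le[of "- (?M $ 1 $ 1 *\<^sub>R h)" "- (?M $ 2 $ 1 *\<^sub>R h)"] by (simp add: algebra_simps)
  also have "\<dots> \<le> ((\<beta> + 1) * r powr (- \<beta>) + (\<beta> + 1) * r powr (- \<beta>)) * norm h"
    using abs_Mmat_le(1,2)[OF assms] by (intro mult_right_mono add_mono) auto
  finally show ?thesis by (simp add: algebra_simps)
qed

lemma norm_le_of_blk_app_Mmat:
  assumes "0 < r" "0 \<le> \<beta>" "-2 < t" "t < -1"
    and "norm (fst (blk_app (Mmat \<beta> t r) (y, w))) \<le> 1" "norm (snd (blk_app (Mmat \<beta> t r) (y, w))) \<le> 1"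
  shows "norm y \<le> 2 * r powr \<beta>" "norm w \<le> 2 * (\<beta> + 1) * r powr (\<beta> - 1)"
proof -
  obtain u v where uv: "blk_app (Mmat \<beta> t r) (y, w) = (u, v)" by fastforce
  have t: "t \<noteq> 0" "1 \<le> \<bar>t\<bar>" using assms(3,4) by auto
  have "(y, w) = blk_app (Amat \<beta> t r ** Mmat \<beta> t r) (y, w)"
    by (simp add: Amat_mult_Mmat[OF assms(1) t(1)])
  also have "\<dots> = (g1 \<beta> r *\<^sub>R u + g2 \<beta> r *\<^sub>R v, (dg1 \<beta> r / t) *\<^sub>R u + (dg2 \<beta> r / t) *\<^sub>R v)"
    by (simp add: blk_app_mult uv Amat_eq[OF assms(1) t(1)])
  finally have y: "y = g1 \<beta> r *\<^sub>R u + g2 \<beta> r *\<^sub>R v"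
    and w: "w = (dg1 \<beta> r / t) *\<^sub>R u + (dg2 \<beta> r / t) *\<^sub>R v" by simp_all
  have u: "norm u \<le> 1" and v: "norm v \<le> 1" using assms(5,6) uv by simp_all
  have "norm y \<le> \<bar>g1 \<beta> r\<bar> * norm u + \<bar>g2 \<beta> r\<bar> * norm v"
    unfolding y by (rule order_trans[OF norm_triangle_ineq]) simp
  also have "\<dots> \<le> r powr \<beta> * 1 + r powr \<beta> * 1"
    using abs_g1_le abs_g2_le u v by (intro add_mono mult_mono) auto
  finally show "norm y \<le> 2 * r powr \<beta>" by simp
  have "norm w \<le> \<bar>dg1 \<beta> r\<bar> / \<bar>t\<bar> * norm u + \<bar>dg2 \<beta> r\<bar> / \<bar>t\<bar> * norm v"
    unfolding w by (rule order_trans[OF norm_triangle_ineq]) (simp add: abs_div)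
  also have "\<dots> \<le> \<bar>dg1 \<beta> r\<bar> * 1 + \<bar>dg2 \<beta> r\<bar> * 1"
    using t u v by (intro add_mono mult_mono) (auto simp: divide_le_eq mult_le_cancel_left1)
  also have "\<dots> \<le> (\<beta> + 1) * r powr (\<beta> - 1) + (\<beta> + 1) * r powr (\<beta> - 1)"
    using abs_dg1_le[OF assms(2)] abs_dg2_le[OF assms(2)] by (intro add_mono) simp_all
  finally show "norm w \<le> 2 * (\<beta> + 1) * r powr (\<beta> - 1)" by (simp add: algebra_simps)
qed

lemma linear_F_app: "linear (F_app \<beta> t r)"
  by (simp add: linear_iff F_app_def algebra_simps)

lemma norm_F_app_le:
  assumes "0 < r" "1 \<le> \<beta>" "1 \<le> \<bar>t\<bar>"
  shows "norm (F_app \<beta> t r z) \<le> 2 * (\<beta> + 1)\<^sup>2 * r powr (\<beta> - 2) * norm z"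
proof -
  let ?K = "(\<beta> + 1)\<^sup>2 * r powr (\<beta> - 2)"
  have "\<bar>inverse t\<bar> \<le> 1" using assms(3) by (simp add: abs_inverse inverse_le_1_iff)
  then have coeff: "\<bar>inverse t * ddg1 \<beta> r\<bar> \<le> ?K" "\<bar>inverse t * ddg2 \<beta> r\<bar> \<le> ?K"
    using mult_right_mono[of "\<bar>inverse t\<bar>" 1 "\<bar>ddg1 \<beta> r\<bar>"] mult_right_mono[of "\<bar>inverse t\<bar>" 1 "\<bar>ddg2 \<beta> r\<bar>"]
      abs_ddg1_le[OF assms(2), of r] abs_ddg2_le[OF assms(2), of r]
    by (simp_all add: abs_mult)
  have "norm (F_app \<beta> t r z) \<le> \<bar>inverse t * ddg1 \<beta> r\<bar> * norm (fst z) + \<bar>inverse t * ddg2 \<beta> r\<bar> * norm (snd z)"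
    unfolding F_app_def deriv_deriv_g1[OF assms(1)] deriv_deriv_g2[OF assms(1)]
    by (rule order_trans[OF norm_triangle_ineq]) simp
  also have "\<dots> \<le> ?K * norm z + ?K * norm z"
    using coeff norm_fst_le[of "fst z" "snd z"] norm_snd_le[of "snd z" "fst z"]
    by (intro add_mono mult_mono) auto
  finally show ?thesis by (simp add: ac_simps)
qed

section \<open>Smooth functions with compact support\<close>

lemma iterdd_append: "iterdd vs (iterdd ws f) = iterdd (vs @ ws) f"
  by (induction vs) auto

lemma smooth_fun_iterdd: "smooth_fun f \<Longrightarrow> smooth_fun (iterdd vs f)"
  by (simp add: smooth_fun_def iterdd_append)

lemma smooth_fun_continuous_on: "smooth_fun f \<Longrightarrow> continuous_on S f"
  using iterdd.simps(1) unfolding smooth_fun_def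
  by (metis continuous_at_imp_continuous_on differentiable_imp_continuous_within)

lemma iterdd_eq_0_outside:
  assumes "smooth_fun f" "closed K" "\<And>x. x \<notin> K \<Longrightarrow> f x = 0" "x \<notin> K"
  shows "iterdd vs f x = 0"
  using assms(4)
proof (induction vs arbitrary: x)
  case Nil
  then show ?case using assms(3) by simp
next
  case (Cons v vs)
  have "(iterdd vs f has_derivative (\<lambda>_. 0)) (at x)"
    by (rule has_derivative_transform_within_open[of "\<lambda>_. 0" _ x UNIV "- K"])
       (use assms(2) Cons in auto)
  then show ?case by (simp add: frechet_derivative_at[symmetric])
qed

lemma bounded_if_compact_support:
  fixes f :: "'a::topological_space \<Rightarrow> 'b::real_normed_vector"
  assumes "continuous_on UNIV f" "compact K" "\<And>x. x \<notin> K \<Longrightarrow> f x = 0"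
  obtains B where "\<And>x. norm (f x) \<le> B"
proof -
  obtain B where B: "\<And>y. y \<in> f ` K \<Longrightarrow> norm y \<le> B"
    using compact_imp_bounded[OF compact_continuous_image[OF continuous_on_subset[OF assms(1)] assms(2)]]
    by (auto simp: bounded_iff)
  have "norm (f x) \<le> max B 0" for x
    using B[of "f x"] assms(3)[of x] by (cases "x \<in> K") auto
  then show ?thesis using that by blast
qed

lemma smooth_fun_compact_support_bounded_lipschitz:
  fixes f :: "'a::euclidean_space \<Rightarrow> real"
  assumes "smooth_fun f" "compact K" "\<And>x. x \<notin> K \<Longrightarrow> f x = 0"
  obtains B L where "\<And>x. \<bar>f x\<bar> \<le> B" "L-lipschitz_on UNIV f"
proof -
  have vanish: "\<And>vs x. x \<notin> K \<Longrightarrow> iterdd vs f x = 0"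
    using iterdd_eq_0_outside[OF assms(1) compact_imp_closed[OF assms(2)] assms(3)] by blast
  have "\<exists>B. \<forall>x. \<bar>iterdd vs f x\<bar> \<le> B" for vs
    using bounded_if_compact_support[OF smooth_fun_continuous_on[OF smooth_fun_iterdd[OF assms(1)]]
        assms(2) vanish] by (metis real_norm_def)
  then obtain Bd where Bd: "\<And>vs x. \<bar>iterdd vs f x\<bar> \<le> Bd vs" by metis
  define L where "L = (\<Sum>i\<in>Basis. Bd [i])"
  let ?D = "\<lambda>x. frechet_derivative f (at x)"
  have D: "(f has_derivative ?D x) (at x within UNIV)" for x
    using assms(1) iterdd.simps(1) unfolding smooth_fun_def by (metis frechet_derivative_works)
  have "onorm (?D x) \<le> L" for x
  proof (rule onorm_le)
    fix y :: 'a
    have "?D x y = ?D x (\<Sum>i\<in>Basis. (y \<bullet> i) *\<^sub>R i)"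
      by (simp add: euclidean_representation)
    also have "\<dots> = (\<Sum>i\<in>Basis. (y \<bullet> i) * iterdd [i] f x)"
      using has_derivative_linear[OF D] by (simp add: linear_sum linear_scale)
    also have "norm \<dots> \<le> (\<Sum>i\<in>Basis. norm y * Bd [i])"
      unfolding real_norm_def
      by (rule order_trans[OF sum_abs sum_mono])
         (auto simp: abs_mult intro!: mult_mono Basis_le_norm Bd[of "[_]", simplified])
    finally show "norm (?D x y) \<le> L * norm y" by (simp add: L_def sum_distrib_left mult.commute)
  qed
  moreover have "0 \<le> L" unfolding L_def using Bd by (intro sum_nonneg) (meson abs_ge_zero order_trans)
  ultimately have "L-lipschitz_on UNIV f"
    using D by (intro bounded_derivative_imp_lipschitz) auto
  then show ?thesis using that Bd[of "[]"] by (metis iterdd.simps(1))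
qed

lemma vec_bounded_lipschitz:
  fixes G :: "'a::real_normed_vector \<Rightarrow> real^'n"
  assumes "\<And>j x. \<bar>G x $ j\<bar> \<le> B j" "\<And>j. (L j)-lipschitz_on UNIV (\<lambda>x. G x $ j)"
  shows "norm (G x) \<le> sum B UNIV" "(sum L UNIV)-lipschitz_on UNIV G"
proof -
  show "norm (G x) \<le> sum B UNIV"
    using assms(1) by (rule order_trans[OF norm_le_l1_cart sum_mono])
  have "norm (G x - G y) \<le> (\<Sum>j\<in>UNIV. L j * norm (x - y))" for x y
    using lipschitz_on_normD[OF assms(2)]
    by (intro order_trans[OF norm_le_l1_cart sum_mono]) simp
  then show "(sum L UNIV)-lipschitz_on UNIV G"
    using lipschitz_on_nonneg[OF assms(2)]
    by (intro lipschitz_onI) (auto simp: dist_norm sum_distrib_right sum_nonneg)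
qed

lemma smooth_fun_derivative_bounded_lipschitz:
  fixes f :: "'a::euclidean_space \<Rightarrow> real" and G :: "'a \<Rightarrow> real^'n"
  assumes "smooth_fun f" "compact K" "\<And>x. x \<notin> K \<Longrightarrow> f x = 0"
    and "\<And>x j. G x $ j = frechet_derivative f (at x) (e j)"
  obtains B L where "\<And>x. norm (G x) \<le> B" "L-lipschitz_on UNIV G"
proof -
  have "\<forall>j. \<exists>B L. (\<forall>x. \<bar>G x $ j\<bar> \<le> B) \<and> L-lipschitz_on UNIV (\<lambda>x. G x $ j)"
  proof
    fix j
    obtain B L where "\<And>x. \<bar>iterdd [e j] f x\<bar> \<le> B" "L-lipschitz_on UNIV (iterdd [e j] f)"
      using smooth_fun_compact_support_bounded_lipschitz[OF smooth_fun_iterdd[OF assms(1)] assms(2)]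
        iterdd_eq_0_outside[OF assms(1) compact_imp_closed[OF assms(2)] assms(3)] by blast
    then show "\<exists>B L. (\<forall>x. \<bar>G x $ j\<bar> \<le> B) \<and> L-lipschitz_on UNIV (\<lambda>x. G x $ j)"
      by (intro exI[of _ B] exI[of _ L]) (simp add: assms(4))
  qed
  then obtain B L where "\<forall>j. (\<forall>x. \<bar>G x $ j\<bar> \<le> B j) \<and> (L j)-lipschitz_on UNIV (\<lambda>x. G x $ j)"
    unfolding choice_iff by blast
  then show ?thesis
    using vec_bounded_lipschitz[of G B L] that by blast
qed

lemma lipschitz_on_slice:
  assumes "L-lipschitz_on UNIV f"
  shows "L-lipschitz_on UNIV (\<lambda>z. f (t, z))"
proof (rule lipschitz_onI)
  show "dist (f (t, x)) (f (t, y)) \<le> L * dist x y" for x y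
    using lipschitz_onD[OF assms, of "(t, x)" "(t, y)"] by (simp add: dist_Pair_Pair)
qed (rule lipschitz_on_nonneg[OF assms])

lemma le_max_mult_min_oneI:
  fixes a d M1 M2 :: real
  assumes "a \<le> M1" "a \<le> M2 * d" "0 \<le> d"
  shows "a \<le> max M1 M2 * min 1 d"
proof (cases "d \<le> 1")
  case True
  then show ?thesis
    using assms(2) mult_right_mono[OF max.cobounded2[of M2 M1] assms(3)] by (simp add: min_def)
qed (use assms(1) in \<open>simp add: min_def\<close>)

lemma bounded_lipschitz_diff_le:
  fixes f :: "'a::real_normed_vector \<Rightarrow> 'b::real_normed_vector"
  assumes "\<And>x. norm (f x) \<le> B" "L-lipschitz_on UNIV f"
  shows "norm (f x - f y) \<le> max (2 * B) L * min 1 (norm (x - y))"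
proof (rule le_max_mult_min_oneI)
  show "norm (f x - f y) \<le> 2 * B"
    using norm_triangle_ineq4[of "f x" "f y"] assms(1)[of x] assms(1)[of y] by linarith
  show "norm (f x - f y) \<le> L * norm (x - y)"
    using lipschitz_on_normD[OF assms(2)] by simp
qed simp

lemma scaleR_linear_diff_le:
  fixes f :: "'a::real_normed_vector \<Rightarrow> real" and T :: "'a \<Rightarrow> 'b::real_normed_vector"
  assumes f: "\<And>x. \<bar>f x\<bar> \<le> B" "L-lipschitz_on UNIV f" "\<And>x. f x \<noteq> 0 \<Longrightarrow> norm x \<le> R" "0 \<le> R"
    and T: "linear T" "\<And>x. norm (T x) \<le> c * norm x" "0 \<le> c"
  shows "norm (f x *\<^sub>R T x - f y *\<^sub>R T y) \<le> c * max (2 * B * R) (L * R + B) * min 1 (norm (x - y))"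
proof -
  have B: "0 \<le> B" using f(1) by (meson abs_ge_zero order_trans)
  have TR: "norm (T x) \<le> c * R" if "norm x \<le> R" for x
    using T(2)[of x] mult_left_mono[OF that T(3)] by linarith
  have small: "norm (f x *\<^sub>R T x) \<le> c * (B * R)" for x
  proof (cases "f x = 0")
    case False
    then have "\<bar>f x\<bar> * norm (T x) \<le> B * (c * R)"
      using B f(1) TR f(3) by (intro mult_mono) auto
    then show ?thesis by (simp add: ac_simps)
  qed (use B f(4) T(3) in simp)
  have lip: "norm (f x *\<^sub>R T x - f y *\<^sub>R T y) \<le> c * (L * R + B) * norm (x - y)"
    if "norm x \<le> R" for x y
  proof -
    have "f x *\<^sub>R T x - f y *\<^sub>R T y = (f x - f y) *\<^sub>R T x + f y *\<^sub>R T (x - y)"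
      by (simp add: linear_diff[OF T(1)] algebra_simps)
    then have "norm (f x *\<^sub>R T x - f y *\<^sub>R T y) \<le> \<bar>f x - f y\<bar> * norm (T x) + \<bar>f y\<bar> * norm (T (x - y))"
      by (metis norm_scaleR norm_triangle_ineq)
    also have "\<dots> \<le> (L * norm (x - y)) * (c * R) + B * (c * norm (x - y))"
      using lipschitz_on_normD[OF f(2), of x y] TR[OF that] f(1)[of y] T(2)[of "x - y"]
      by (intro add_mono mult_mono) auto
    finally show ?thesis by (simp add: algebra_simps)
  qed
  have "norm (f x *\<^sub>R T x - f y *\<^sub>R T y) \<le> c * (L * R + B) * norm (x - y)"
  proof (cases "f x = 0 \<and> f y = 0")
    case False
    then show ?thesis
      using lip[of x y] lip[of y x] f(3) by (auto simp: norm_minus_commute)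
  qed (use B lipschitz_on_nonneg[OF f(2)] T(3) f(4) in simp)
  moreover have "norm (f x *\<^sub>R T x - f y *\<^sub>R T y) \<le> c * (2 * B * R)"
    using norm_triangle_ineq4[of "f x *\<^sub>R T x" "f y *\<^sub>R T y"] small[of x] small[of y]
    by (simp only: mult_2 distrib_right distrib_left)
  ultimately show ?thesis
    using le_max_mult_min_oneI[of _ "c * (2 * B * R)" "c * (L * R + B)"] T(3)
    by (simp add: max_mult_distrib_left mult.assoc)
qed

lemma min_one_mult_le: "1 \<le> c \<Longrightarrow> 0 \<le> x \<Longrightarrow> min 1 (c * x) \<le> c * min (1::real) x"
  using mult_mono[of 1 c 1 x] by (auto simp: min_def)

lemma min_one_le_powr:
  fixes x s :: real
  assumes "0 \<le> x" "0 < s" "s \<le> 1"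
  shows "min 1 x \<le> x powr s"
proof (cases "x \<le> 1")
  case True
  then show ?thesis using assms powr_mono'[of s 1 x] by (cases "x = 0") auto
qed (use assms ge_one_powr_ge_zero in auto)

section \<open>Kernel estimates\<close>

definition bump_box :: "'n::finite pt set" where
  "bump_box = {-2<..<-1} \<times> ball 0 1 \<times> ball 0 1"

lemma bounded_bump_box: "bounded (bump_box :: 'n::finite pt set)"
proof -
  have "{-2<..<-1::real} \<subseteq> {-2..-1}" by auto
  then have "bounded {-2<..<-1::real}"
    by (rule bounded_subset[OF compact_imp_bounded[OF compact_Icc]])
  then show ?thesis
    unfolding bump_box_def by (intro bounded_Times bounded_ball)
qed

definition diff_box :: "real \<Rightarrow> real \<Rightarrow> real^'n \<Rightarrow> 'n pt set" where
  "diff_box \<beta> \<rho> h = {-\<rho>..0} \<times> (cball 0 (2 * \<rho> powr \<beta>) \<union> cball h (2 * \<rho> powr \<beta>))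
     \<times> cball 0 (2 * (\<beta> + 1) * \<rho> powr (\<beta> - 1))"

lemma diff_box_mono:
  assumes "1 \<le> \<beta>" "0 < \<rho>" "\<rho> \<le> \<rho>'"
  shows "diff_box \<beta> \<rho> h \<subseteq> diff_box \<beta> \<rho>' h"
proof -
  have "2 * \<rho> powr \<beta> \<le> 2 * \<rho>' powr \<beta>" "2 * (\<beta> + 1) * \<rho> powr (\<beta> - 1) \<le> 2 * (\<beta> + 1) * \<rho>' powr (\<beta> - 1)"
    using assms by (simp_all add: powr_mono2)
  then show ?thesis
    unfolding diff_box_def using assms(3)
    by (intro Sigma_mono Un_mono subset_cball) auto
qed

(* The factor min 1 (|h| r\<^sup>-\<^sup>\<beta>) records at once the sup bound and the Lipschitz bound of the
   y-difference D r of a kernel at time r. *)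
definition kernel_estimate ::
    "real \<Rightarrow> real^'n \<Rightarrow> real \<Rightarrow> real \<Rightarrow> (real \<Rightarrow> 'n pt \<Rightarrow> 'b::real_normed_vector) \<Rightarrow> bool" where
  "kernel_estimate \<beta> h a C D \<longleftrightarrow> 0 \<le> C \<and>
     (\<forall>r p. 0 \<le> r \<longrightarrow> D r p \<noteq> 0 \<longrightarrow> -2 * r < fst p \<and> fst p < -r \<and> p \<in> diff_box \<beta> (- fst p) h) \<and>
     (\<forall>r p. 0 < r \<longrightarrow> norm (D r p) \<le> C * r powr (-a) * min 1 (norm h * r powr (-\<beta>)))"

lemma kernel_estimateD:
  assumes "kernel_estimate \<beta> h a C D"
  shows "0 \<le> C"
    and "0 \<le> r \<Longrightarrow> D r p \<noteq> 0 \<Longrightarrow> -2 * r < fst p"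
    and "0 \<le> r \<Longrightarrow> D r p \<noteq> 0 \<Longrightarrow> fst p < -r"
    and "0 \<le> r \<Longrightarrow> D r p \<noteq> 0 \<Longrightarrow> p \<in> diff_box \<beta> (- fst p) h"
    and "0 < r \<Longrightarrow> norm (D r p) \<le> C * r powr (-a) * min 1 (norm h * r powr (-\<beta>))"
  using assms unfolding kernel_estimate_def by blast+

lemma kernel_estimate_le_powr:
  assumes "kernel_estimate \<beta> h a C D" "0 < r" "0 < s" "s \<le> 1"
  shows "norm (D r p) \<le> C * norm h powr s * r powr (- a - \<beta> * s)"
proof -
  have "norm (D r p) \<le> C * r powr (- a) * min 1 (norm h * r powr (- \<beta>))"
    using kernel_estimateD(5)[OF assms(1,2)] .
  also have "\<dots> \<le> C * r powr (- a) * (norm h * r powr (- \<beta>)) powr s"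
    using kernel_estimateD(1)[OF assms(1)] assms(3,4) min_one_le_powr[of "norm h * r powr (- \<beta>)" s]
    by (intro mult_left_mono) auto
  also have "\<dots> = C * norm h powr s * r powr (- a - \<beta> * s)"
    using assms(2) by (simp add: powr_mult powr_powr powr_add[symmetric] algebra_simps)
  finally show ?thesis .
qed

lemma mem_diff_box_of_bump_box:
  assumes \<beta>: "1 \<le> \<beta>" and r: "0 < r"
    and bump: "(\<sigma>/r, blk_app (Mmat \<beta> (\<sigma>/r) r) (y', w)) \<in> bump_box" and y': "y' = y - h \<or> y' = y"
  shows "-2 * r < \<sigma>" "\<sigma> < -r" "(\<sigma>, y, w) \<in> diff_box \<beta> (-\<sigma>) h"
proof -
  have t: "-2 < \<sigma>/r" "\<sigma>/r < -1"
    using bump by (auto simp: bump_box_def)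
  then show \<sigma>: "-2 * r < \<sigma>" "\<sigma> < -r"
    using r by (simp_all add: field_simps)
  have "norm y' \<le> 2 * r powr \<beta>" "norm w \<le> 2 * (\<beta> + 1) * r powr (\<beta> - 1)"
    using norm_le_of_blk_app_Mmat[of r \<beta> "\<sigma>/r" y' w] r t bump \<beta> by (auto simp: bump_box_def mem_Times_iff)
  moreover have "2 * r powr \<beta> \<le> 2 * (-\<sigma>) powr \<beta>"
    "2 * (\<beta> + 1) * r powr (\<beta> - 1) \<le> 2 * (\<beta> + 1) * (-\<sigma>) powr (\<beta> - 1)"
    using \<beta> r \<sigma> by (simp_all add: powr_mono2)
  ultimately show "(\<sigma>, y, w) \<in> diff_box \<beta> (-\<sigma>) h"
    using y' \<sigma> r by (auto simp: diff_box_def dist_norm norm_minus_commute)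
qed

lemma norm_profile_shift_le:
  assumes \<beta>: "1 \<le> \<beta>" and C: "0 \<le> C" and r: "0 < r" and t: "-2 < \<sigma>/r" "\<sigma>/r < -1"
    and diff: "\<And>z z'. norm (\<Phi> z - \<Phi> z') \<le> C * r powr (-a) * min 1 (norm (z - z'))"
  shows "norm (\<Phi> (blk_app (Mmat \<beta> (\<sigma>/r) r) (y - h, w)) - \<Phi> (blk_app (Mmat \<beta> (\<sigma>/r) r) (y, w)))
           \<le> 2 * (\<beta> + 1) * C * r powr (-a) * min 1 (norm h * r powr (-\<beta>))"
proof -
  let ?z = "\<lambda>y. blk_app (Mmat \<beta> (\<sigma>/r) r) (y, w)"
  have "norm (?z (y - h) - ?z y) \<le> 2 * (\<beta> + 1) * (norm h * r powr (-\<beta>))"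
    using norm_blk_app_Mmat_shift_le[OF r _ t, of \<beta> y h w] \<beta> by (simp add: ac_simps)
  then have "min 1 (norm (?z (y - h) - ?z y)) \<le> 2 * (\<beta> + 1) * min 1 (norm h * r powr (-\<beta>))"
    using \<beta> by (intro order_trans[OF _ min_one_mult_le]) auto
  then have "C * r powr (-a) * min 1 (norm (?z (y - h) - ?z y))
      \<le> C * r powr (-a) * (2 * (\<beta> + 1) * min 1 (norm h * r powr (-\<beta>)))"
    using C by (intro mult_left_mono) auto
  then show ?thesis
    using diff[of "?z (y - h)" "?z y"] by (simp add: ac_simps)
qed

lemma kernel_estimate_delta_y:
  fixes J :: "real \<Rightarrow> 'n::finite pt \<Rightarrow> 'b::real_normed_vector"
    and \<Phi> :: "real \<Rightarrow> real \<Rightarrow> (real^'n) \<times> (real^'n) \<Rightarrow> 'b"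
  assumes \<beta>: "1 \<le> \<beta>" and C: "0 \<le> C"
    and J: "\<And>r \<sigma> y w. J r (\<sigma>, y, w) = (if \<sigma> = 0 then 0 else \<Phi> r \<sigma> (blk_app (Mmat \<beta> (\<sigma>/r) r) (y, w)))"
    and supp: "\<And>r \<sigma> z. \<Phi> r \<sigma> z \<noteq> 0 \<Longrightarrow> (\<sigma>/r, z) \<in> bump_box"
    and diff: "\<And>r \<sigma> z z'. 0 < r \<Longrightarrow> -2 < \<sigma>/r \<Longrightarrow> \<sigma>/r < -1 \<Longrightarrow>
                 norm (\<Phi> r \<sigma> z - \<Phi> r \<sigma> z') \<le> C * r powr (-a) * min 1 (norm (z - z'))"
  shows "kernel_estimate \<beta> h a (2 * (\<beta> + 1) * C) (\<lambda>r. delta_y h (J r))"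
proof -
  define z where "z = (\<lambda>r \<sigma> (y::real^'n) w. blk_app (Mmat \<beta> (\<sigma>/r) r) (y, w))"
  have delta: "delta_y h (J r) (\<sigma>, y, w)
      = (if \<sigma> = 0 then 0 else \<Phi> r \<sigma> (z r \<sigma> (y - h) w) - \<Phi> r \<sigma> (z r \<sigma> y w))" for r \<sigma> y w
    by (simp add: delta_y_def J z_def)
  have nonzero: "\<exists>y'. (y' = y - h \<or> y' = y) \<and> (\<sigma>/r, z r \<sigma> y' w) \<in> bump_box"
    if "delta_y h (J r) (\<sigma>, y, w) \<noteq> 0" for r \<sigma> y w
  proof -
    have "\<Phi> r \<sigma> (z r \<sigma> (y - h) w) \<noteq> 0 \<or> \<Phi> r \<sigma> (z r \<sigma> y w) \<noteq> 0"
      using that by (auto simp: delta split: if_splits)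
    then show ?thesis using supp[of r \<sigma>] by blast
  qed
  have r_pos: "0 < r" if "0 \<le> r" "(\<sigma>/r, z') \<in> bump_box" for r \<sigma> z'
    using that by (cases "r = 0") (auto simp: bump_box_def)
  have support: "-2 * r < \<sigma> \<and> \<sigma> < -r \<and> (\<sigma>, y, w) \<in> diff_box \<beta> (-\<sigma>) h"
    if r: "0 \<le> r" and nz: "delta_y h (J r) (\<sigma>, y, w) \<noteq> 0" for r \<sigma> y w
  proof -
    obtain y' where y': "y' = y - h \<or> y' = y" "(\<sigma>/r, z r \<sigma> y' w) \<in> bump_box"
      using nonzero[OF nz] by blast
    show ?thesis
      using mem_diff_box_of_bump_box[OF \<beta> r_pos[OF r y'(2)] y'(2)[unfolded z_def] y'(1)] by blast
  qed
  have bound: "norm (delta_y h (J r) p) \<le> 2 * (\<beta> + 1) * C * r powr (-a) * min 1 (norm h * r powr (-\<beta>))"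
    if r: "0 < r" for r p
  proof (cases "delta_y h (J r) p = 0")
    case False
    obtain \<sigma> y w where p: "p = (\<sigma>, y, w)" by (cases p) auto
    have t: "-2 < \<sigma>/r" "\<sigma>/r < -1"
      using nonzero[OF False[unfolded p]] by (auto simp: bump_box_def)
    have "\<sigma> \<noteq> 0" using False by (auto simp: p delta)
    then show ?thesis
      using norm_profile_shift_le[OF \<beta> C r t diff[OF r t]] by (simp add: p delta z_def)
  qed (use C \<beta> in simp)
  show ?thesis
    unfolding kernel_estimate_def using support bound C \<beta> by fastforce
qed

lemma kernel_estimate_factored:
  fixes J :: "real \<Rightarrow> 'n::finite pt \<Rightarrow> 'b::real_normed_vector"
    and \<Psi> :: "real \<Rightarrow> real \<Rightarrow> (real^'n) \<times> (real^'n) \<Rightarrow> 'b"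
  assumes \<beta>: "1 \<le> \<beta>"
    and J: "\<And>r \<sigma> y w. J r (\<sigma>, y, w) =
              (if \<sigma> = 0 then 0 else k r \<sigma> *\<^sub>R \<Psi> r \<sigma> (blk_app (Mmat \<beta> (\<sigma>/r) r) (y, w)))"
    and supp: "\<And>r \<sigma> z. \<Psi> r \<sigma> z \<noteq> 0 \<Longrightarrow> (\<sigma>/r, z) \<in> bump_box"
    and k: "\<And>r \<sigma>. 0 < r \<Longrightarrow> -2 < \<sigma>/r \<Longrightarrow> \<sigma>/r < -1 \<Longrightarrow> \<bar>k r \<sigma>\<bar> \<le> K * r powr (- m)" "0 \<le> K"
    and \<Psi>: "\<And>r \<sigma> z z'. 0 < r \<Longrightarrow> -2 < \<sigma>/r \<Longrightarrow> \<sigma>/r < -1 \<Longrightarrow>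
              norm (\<Psi> r \<sigma> z - \<Psi> r \<sigma> z') \<le> N * r powr e * min 1 (norm (z - z'))" "0 \<le> N"
    and a: "a = m - e"
  shows "\<exists>C. \<forall>h. kernel_estimate \<beta> h a C (\<lambda>r. delta_y h (J r))"
proof -
  have "kernel_estimate \<beta> h a (2 * (\<beta> + 1) * (K * N)) (\<lambda>r. delta_y h (J r))" for h
  proof (rule kernel_estimate_delta_y[OF \<beta> _ J])
    show "norm (k r \<sigma> *\<^sub>R \<Psi> r \<sigma> z - k r \<sigma> *\<^sub>R \<Psi> r \<sigma> z') \<le> K * N * r powr (- a) * min 1 (norm (z - z'))"
      if "0 < r" "-2 < \<sigma>/r" "\<sigma>/r < -1" for r \<sigma> z z'
    proof -
      have "norm (k r \<sigma> *\<^sub>R \<Psi> r \<sigma> z - k r \<sigma> *\<^sub>R \<Psi> r \<sigma> z') = \<bar>k r \<sigma>\<bar> * norm (\<Psi> r \<sigma> z - \<Psi> r \<sigma> z')"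
        by (simp add: scaleR_diff_right[symmetric])
      also have "\<dots> \<le> (K * r powr (- m)) * (N * r powr e * min 1 (norm (z - z')))"
        using k(1)[OF that] \<Psi>(1)[OF that] k(2) by (intro mult_mono) auto
      also have "\<dots> = K * N * (r powr (- m) * r powr e) * min 1 (norm (z - z'))"
        by (simp add: ac_simps)
      also have "r powr (- m) * r powr e = r powr (- a)"
        by (simp add: a powr_add[symmetric])
      finally show ?thesis .
    qed
  qed (use supp k(2) \<Psi>(2) \<beta> in auto)
  then show ?thesis by blast
qed

lemma abs_c0_prefactor_le:
  assumes "-2 < t" "t < -1"
  shows "\<bar>inverse (c0 d) * t ^ n * r powr x\<bar> \<le> 2 ^ n * r powr x"
proof -
  have "\<bar>inverse (c0 d) * t ^ n\<bar> \<le> 2 ^ n"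
    using assms by (simp add: c0_def abs_mult power_abs power_mono)
  then show ?thesis
    by (simp only: abs_mult[of _ "r powr x"] abs_of_nonneg[OF powr_ge_zero] mult_right_mono[OF _ powr_ge_zero])
qed

lemma kernel_estimate_Kr_G1r:
  fixes \<psi> :: "'n::finite pt \<Rightarrow> real"
  assumes \<beta>: "1 \<le> \<beta>"
    and \<psi>: "\<And>p. \<bar>\<psi> p\<bar> \<le> B" "L-lipschitz_on UNIV \<psi>" "\<And>p. \<psi> p \<noteq> 0 \<Longrightarrow> p \<in> bump_box"
  shows "\<exists>C. \<forall>h. kernel_estimate \<beta> h (Qdim CARD('n) \<beta>) C (\<lambda>r. delta_y h (Kr \<psi> \<beta> r))"
    and "\<exists>C. \<forall>h. kernel_estimate \<beta> h (Qdim CARD('n) \<beta>) C (\<lambda>r. delta_y h (G1r \<psi> \<beta> r))"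
proof -
  let ?Q = "Qdim CARD('n) \<beta>" and ?\<Psi> = "\<lambda>r \<sigma> z. \<psi> (\<sigma>/r, z)"
  have \<Psi>: "norm (?\<Psi> r \<sigma> z - ?\<Psi> r \<sigma> z') \<le> max (2 * B) L * r powr 0 * min 1 (norm (z - z'))"
    if "0 < r" for r \<sigma> z z'
    using bounded_lipschitz_diff_le[of "\<lambda>z. \<psi> (\<sigma>/r, z)" B L z z'] \<psi>(1) lipschitz_on_slice[OF \<psi>(2)] that
    by simp
  have supp: "?\<Psi> r \<sigma> z \<noteq> 0 \<Longrightarrow> (\<sigma>/r, z) \<in> bump_box" for r \<sigma> z
    by (rule \<psi>(3))
  have N: "0 \<le> max (2 * B) L" using lipschitz_on_nonneg[OF \<psi>(2)] by simp
  show "\<exists>C. \<forall>h. kernel_estimate \<beta> h ?Q C (\<lambda>r. delta_y h (Kr \<psi> \<beta> r))"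
  proof (rule kernel_estimate_factored[OF \<beta> _ supp _ _ \<Psi> N, where K = "2 ^ CARD('n)" and m = ?Q])
    show "Kr \<psi> \<beta> r (\<sigma>, y, w) = (if \<sigma> = 0 then 0 else
        (inverse (c0 CARD('n)) * (\<sigma>/r) ^ CARD('n) * r powr (- ?Q)) *\<^sub>R ?\<Psi> r \<sigma> (blk_app (Mmat \<beta> (\<sigma>/r) r) (y, w)))"
      for r \<sigma> y w
      by (simp add: Kr_def ac_simps)
  qed (use abs_c0_prefactor_le in auto)
  show "\<exists>C. \<forall>h. kernel_estimate \<beta> h ?Q C (\<lambda>r. delta_y h (G1r \<psi> \<beta> r))"
  proof (rule kernel_estimate_factored[OF \<beta> _ supp _ _ \<Psi> N, where K = "2 ^ (CARD('n) + 1)" and m = ?Q])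
    show "G1r \<psi> \<beta> r (\<sigma>, y, w) = (if \<sigma> = 0 then 0 else
        (- (inverse (c0 CARD('n)) * (\<sigma>/r) ^ (CARD('n) + 1) * r powr (- ?Q))) *\<^sub>R ?\<Psi> r \<sigma> (blk_app (Mmat \<beta> (\<sigma>/r) r) (y, w)))"
      for r \<sigma> y w
      by (simp add: G1r_def ac_simps)
    show "\<bar>- (inverse (c0 CARD('n)) * (\<sigma>/r) ^ (CARD('n) + 1) * r powr (- ?Q))\<bar> \<le> 2 ^ (CARD('n) + 1) * r powr (- ?Q)"
      if "-2 < \<sigma>/r" "\<sigma>/r < -1" for r \<sigma>
      using abs_c0_prefactor_le[OF that] by (simp only: abs_minus_cancel)
  qed simp_all
qed

lemma kernel_estimate_G0r:
  fixes \<psi> :: "'n::finite pt \<Rightarrow> real"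
  assumes \<beta>: "1 \<le> \<beta>"
    and gx: "\<And>p. norm (grad_x \<psi> p) \<le> Bx" "Lx-lipschitz_on UNIV (grad_x \<psi>)"
      "\<And>p. grad_x \<psi> p \<noteq> 0 \<Longrightarrow> p \<in> bump_box"
    and gv: "\<And>p. norm (grad_v \<psi> p) \<le> Bv" "Lv-lipschitz_on UNIV (grad_v \<psi>)"
      "\<And>p. grad_v \<psi> p \<noteq> 0 \<Longrightarrow> p \<in> bump_box"
  shows "\<exists>C. \<forall>h. kernel_estimate \<beta> h (Qdim CARD('n) \<beta> + \<beta> - 1) C (\<lambda>r. delta_y h (G0r \<psi> \<beta> r))"
proof (rule kernel_estimate_factored[OF \<beta>, where k = "\<lambda>r \<sigma>. inverse (c0 CARD('n)) * (\<sigma>/r) ^ (CARD('n) + 1) * r powr (- Qdim CARD('n) \<beta>)"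
      and K = "2 ^ (CARD('n) + 1)" and m = "Qdim CARD('n) \<beta>"
      and \<Psi> = "\<lambda>r \<sigma> z. Mmat \<beta> (\<sigma>/r) r $ 1 $ 2 *\<^sub>R grad_x \<psi> (\<sigma>/r, z) + Mmat \<beta> (\<sigma>/r) r $ 2 $ 2 *\<^sub>R grad_v \<psi> (\<sigma>/r, z)"
      and N = "2 * (max (2 * Bx) Lx + max (2 * Bv) Lv)" and e = "1 - \<beta>"])
  show "norm ((Mmat \<beta> (\<sigma>/r) r $ 1 $ 2 *\<^sub>R grad_x \<psi> (\<sigma>/r, z) + Mmat \<beta> (\<sigma>/r) r $ 2 $ 2 *\<^sub>R grad_v \<psi> (\<sigma>/r, z))
      - (Mmat \<beta> (\<sigma>/r) r $ 1 $ 2 *\<^sub>R grad_x \<psi> (\<sigma>/r, z') + Mmat \<beta> (\<sigma>/r) r $ 2 $ 2 *\<^sub>R grad_v \<psi> (\<sigma>/r, z')))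
      \<le> 2 * (max (2 * Bx) Lx + max (2 * Bv) Lv) * r powr (1 - \<beta>) * min 1 (norm (z - z'))"
    if r: "0 < r" and t: "-2 < \<sigma>/r" "\<sigma>/r < -1" for r \<sigma> z z'
  proof -
    let ?M = "Mmat \<beta> (\<sigma>/r) r" and ?d = "min 1 (norm (z - z'))"
    have "norm (grad_x \<psi> (\<sigma>/r, z) - grad_x \<psi> (\<sigma>/r, z')) \<le> max (2 * Bx) Lx * ?d"
      "norm (grad_v \<psi> (\<sigma>/r, z) - grad_v \<psi> (\<sigma>/r, z')) \<le> max (2 * Bv) Lv * ?d"
      using bounded_lipschitz_diff_le[of "\<lambda>z. grad_x \<psi> (\<sigma>/r, z)" Bx Lx z z'] gx(1) lipschitz_on_slice[OF gx(2)]
        bounded_lipschitz_diff_le[of "\<lambda>z. grad_v \<psi> (\<sigma>/r, z)" Bv Lv z z'] gv(1) lipschitz_on_slice[OF gv(2)]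
      by simp_all
    then have "norm (?M $ 1 $ 2 *\<^sub>R (grad_x \<psi> (\<sigma>/r, z) - grad_x \<psi> (\<sigma>/r, z'))
        + ?M $ 2 $ 2 *\<^sub>R (grad_v \<psi> (\<sigma>/r, z) - grad_v \<psi> (\<sigma>/r, z')))
        \<le> 2 * r powr (1 - \<beta>) * (max (2 * Bx) Lx * ?d) + 2 * r powr (1 - \<beta>) * (max (2 * Bv) Lv * ?d)"
      using abs_Mmat_le(3,4)[OF r _ t] \<beta>
      by (intro order_trans[OF norm_triangle_ineq] add_mono) (auto intro!: mult_mono)
    then show ?thesis by (simp add: algebra_simps)
  qed
  show "(\<sigma>/r, z) \<in> bump_box"
    if "Mmat \<beta> (\<sigma>/r) r $ 1 $ 2 *\<^sub>R grad_x \<psi> (\<sigma>/r, z) + Mmat \<beta> (\<sigma>/r) r $ 2 $ 2 *\<^sub>R grad_v \<psi> (\<sigma>/r, z) \<noteq> 0"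
    for r \<sigma> z
  proof (rule ccontr)
    assume "(\<sigma>/r, z) \<notin> bump_box"
    then have "grad_x \<psi> (\<sigma>/r, z) = 0" "grad_v \<psi> (\<sigma>/r, z) = 0" using gx(3) gv(3) by blast+
    then show False using that by simp
  qed
  show "\<bar>inverse (c0 CARD('n)) * (\<sigma>/r) ^ (CARD('n) + 1) * r powr (- Qdim CARD('n) \<beta>)\<bar>
      \<le> 2 ^ (CARD('n) + 1) * r powr (- Qdim CARD('n) \<beta>)" if "-2 < \<sigma>/r" "\<sigma>/r < -1" for r \<sigma>
    using abs_c0_prefactor_le[OF that] .
qed (use lipschitz_on_nonneg[OF gx(2)] lipschitz_on_nonneg[OF gv(2)] in \<open>auto simp: G0r_def Let_def\<close>)

lemma kernel_estimate_Gvr: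
  fixes \<psi> :: "'n::finite pt \<Rightarrow> real"
  assumes \<beta>: "1 \<le> \<beta>"
    and \<psi>: "\<And>p. \<bar>\<psi> p\<bar> \<le> B" "L-lipschitz_on UNIV \<psi>" "\<And>p. \<psi> p \<noteq> 0 \<Longrightarrow> p \<in> bump_box"
  shows "\<exists>C. \<forall>h. kernel_estimate \<beta> h (Qdim CARD('n) \<beta> + 2 - \<beta>) C (\<lambda>r. delta_y h (Gvr \<psi> \<beta> r))"
proof (rule kernel_estimate_factored[OF \<beta>, where k = "\<lambda>r \<sigma>. - (inverse (c0 CARD('n)) * (\<sigma>/r) ^ CARD('n) * r powr (- Qdim CARD('n) \<beta>))"
      and K = "2 ^ CARD('n)" and m = "Qdim CARD('n) \<beta>"
      and \<Psi> = "\<lambda>r \<sigma> z. \<psi> (\<sigma>/r, z) *\<^sub>R F_app \<beta> (\<sigma>/r) r z"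
      and N = "2 * (\<beta> + 1)\<^sup>2 * max (2 * B * 2) (L * 2 + B)" and e = "\<beta> - 2"])
  have small: "norm z \<le> 2" if "\<psi> (t, z) \<noteq> 0" for t z
  proof -
    have "norm (fst z) < 1" "norm (snd z) < 1" using \<psi>(3)[OF that] by (auto simp: bump_box_def)
    then show ?thesis using norm_Pair_le[of "fst z" "snd z"] by simp
  qed
  show "norm (\<psi> (\<sigma>/r, z) *\<^sub>R F_app \<beta> (\<sigma>/r) r z - \<psi> (\<sigma>/r, z') *\<^sub>R F_app \<beta> (\<sigma>/r) r z')
      \<le> 2 * (\<beta> + 1)\<^sup>2 * max (2 * B * 2) (L * 2 + B) * r powr (\<beta> - 2) * min 1 (norm (z - z'))"
    if r: "0 < r" and t: "-2 < \<sigma>/r" "\<sigma>/r < -1" for r \<sigma> z z'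
  proof -
    have "1 \<le> \<bar>\<sigma>/r\<bar>" using t by linarith
    from scaleR_linear_diff_le[OF \<psi>(1) lipschitz_on_slice[OF \<psi>(2)] small _ linear_F_app norm_F_app_le[OF r \<beta> this]]
    show ?thesis by (simp add: ac_simps)
  qed
  show "0 \<le> 2 * (\<beta> + 1)\<^sup>2 * max (2 * B * 2) (L * 2 + B)"
    using \<psi>(1)[of 0] by simp
  show "\<bar>- (inverse (c0 CARD('n)) * (\<sigma>/r) ^ CARD('n) * r powr (- Qdim CARD('n) \<beta>))\<bar>
      \<le> 2 ^ CARD('n) * r powr (- Qdim CARD('n) \<beta>)" if "-2 < \<sigma>/r" "\<sigma>/r < -1" for r \<sigma>
    using abs_c0_prefactor_le[OF that] by (simp only: abs_minus_cancel)
qed (use \<psi>(3) in \<open>auto simp: Gvr_def Let_def\<close>)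

section \<open>Lebesgue and weak Lebesgue bounds\<close>

lemma emeasure_lborel_Times:
  fixes A :: "'a::euclidean_space set" and B :: "'b::euclidean_space set"
  assumes "A \<in> sets lborel" "B \<in> sets lborel"
  shows "emeasure lborel (A \<times> B) = emeasure lborel A * emeasure lborel B"
  using assms by (simp add: lborel_prod[symmetric] lborel.emeasure_pair_measure_Times)

lemma diff_box_sets: "diff_box \<beta> \<rho> h \<in> sets lborel"
  unfolding diff_box_def sets_lborel
  by (intro borel_closed closed_Times closed_Un closed_cball closed_atLeastAtMost)

lemma emeasure_diff_box_le:
  assumes "1 \<le> \<beta>"
  obtains V where "0 < V"
    "\<And>\<rho> h. 0 < \<rho> \<Longrightarrow> emeasure lborel (diff_box \<beta> \<rho> (h::real^'n)) \<le> ennreal (V * \<rho> powr Qdim CARD('n) \<beta>)"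
proof
  let ?d = "CARD('n)" and ?u = "unit_ball_vol (real CARD('n))"
  define V where "V = 2 * ?u\<^sup>2 * 2 ^ ?d * (2 * (\<beta> + 1)) ^ ?d"
  have "0 < ?u" by (rule unit_ball_vol_pos) simp
  then show "0 < V" unfolding V_def using assms by (intro mult_pos_pos zero_less_power) auto
  fix \<rho> :: real and h :: "real^'n"
  assume \<rho>: "0 < \<rho>"
  let ?a = "2 * \<rho> powr \<beta>" and ?c = "2 * (\<beta> + 1) * \<rho> powr (\<beta> - 1)"
  have cball: "emeasure lborel (cball (x::real^'n) R) = ennreal (?u * R ^ ?d)" if "0 \<le> R" for x R
    using emeasure_cball[OF that, of x] by simp
  have "emeasure lborel (cball 0 ?a \<union> cball h ?a) \<le> emeasure lborel (cball (0::real^'n) ?a) + emeasure lborel (cball h ?a)"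
    by (rule emeasure_subadditive) auto
  also have "\<dots> = ennreal (2 * (?u * ?a ^ ?d))"
    using \<rho> by (simp add: cball ennreal_plus[symmetric] del: ennreal_plus)
  moreover have "emeasure lborel (diff_box \<beta> \<rho> h) = emeasure lborel {-\<rho>..0}
      * (emeasure lborel (cball 0 ?a \<union> cball h ?a) * emeasure lborel (cball (0::real^'n) ?c))"
    unfolding diff_box_def
    by (intro trans[OF emeasure_lborel_Times] arg_cong2[where f = times] emeasure_lborel_Times refl)
       (simp_all only: sets_lborel, (intro borel_closed closed_Times closed_Un closed_cball closed_atLeastAtMost)+)
  ultimately have "emeasure lborel (diff_box \<beta> \<rho> h) \<le> ennreal \<rho> * (ennreal (2 * (?u * ?a ^ ?d)) * ennreal (?u * ?c ^ ?d))"
    using \<rho> assms by (simp add: cball mult_left_mono mult_right_mono)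
  also have "\<dots> = ennreal (\<rho> * (2 * (?u * ?a ^ ?d) * (?u * ?c ^ ?d)))"
    using \<rho> assms by (simp add: ennreal_mult)
  also have "\<rho> * (2 * (?u * ?a ^ ?d) * (?u * ?c ^ ?d)) = V * (\<rho> * (\<rho> powr \<beta>) ^ ?d * (\<rho> powr (\<beta> - 1)) ^ ?d)"
    by (simp add: V_def power_mult_distrib power2_eq_square mult_ac)
  also have "\<rho> * (\<rho> powr \<beta>) ^ ?d * (\<rho> powr (\<beta> - 1)) ^ ?d = \<rho> powr Qdim ?d \<beta>"
    using \<rho> by (simp add: powr_realpow[symmetric] powr_powr powr_add[symmetric] powr_mult_base Qdim_def algebra_simps)
  finally show "emeasure lborel (diff_box \<beta> \<rho> h) \<le> ennreal (V * \<rho> powr Qdim ?d \<beta>)" .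
qed

lemma ennpowr_mono:
  assumes "x \<le> y" "0 \<le> p"
  shows "ennpowr x p \<le> ennpowr y p"
proof (cases "y = \<infinity>")
  case False
  then show ?thesis
    using assms enn2real_mono[OF assms(1)] by (auto simp: ennpowr_def top_unique less_top powr_mono2)
qed (simp add: ennpowr_def)

lemma ennpowr_ennreal: "0 \<le> x \<Longrightarrow> ennpowr (ennreal x) p = ennreal (x powr p)"
  by (simp add: ennpowr_def)

(* m > 0 matters for \<theta> = \<infinity>: then recip \<theta> = 0, and 0 powr 0 = 0. *)
lemma Lnorm_le_indicator:
  fixes f :: "'a::euclidean_space \<Rightarrow> 'b::real_normed_vector"
  assumes f: "\<And>x. norm (f x) \<le> A * indicator S x"
    and S: "S \<in> sets lborel" "emeasure lborel S \<le> ennreal m"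
    and A: "0 \<le> A" and m: "0 < m" and \<theta>: "1 \<le> \<theta>"
    and meas: "\<theta> = \<infinity> \<Longrightarrow> f \<in> borel_measurable lborel"
  shows "Lnorm \<theta> f \<le> ennreal (A * m powr recip \<theta>)"
proof (cases \<theta>)
  case PInf
  have "esssup lborel (\<lambda>x. ereal (norm (f x))) \<le> ereal A"
  proof (rule esssup_I)
    have "norm (f x) \<le> A" for x
      using f[of x] A by (cases "x \<in> S") auto
    then show "AE x in lborel. ereal (norm (f x)) \<le> ereal A"
      by simp
  qed (use meas[OF PInf] in measurable)
  then have "Lnorm \<theta> f \<le> ennreal A"
    unfolding Lnorm_def PInf using e2ennreal_mono by fastforce
  then show ?thesis using m by (simp add: PInf recip_def)
next
  case (real t)
  have t: "1 \<le> t" using \<theta> real by simp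
  have "(\<integral>\<^sup>+ x. ennreal (norm (f x) powr t) \<partial>lborel) \<le> (\<integral>\<^sup>+ x. ennreal (A powr t) * indicator S x \<partial>lborel)"
  proof (rule nn_integral_mono)
    show "ennreal (norm (f x) powr t) \<le> ennreal (A powr t) * indicator S x" for x
    proof (cases "x \<in> S")
      case True
      then have "norm (f x) \<le> A" using f[of x] by simp
      then show ?thesis using True t by (simp add: powr_mono2)
    next
      case False
      then have "f x = 0" using f[of x] by simp
      then show ?thesis by simp
    qed
  qed
  also have "\<dots> = ennreal (A powr t) * emeasure lborel S"
    using S(1) by (rule nn_integral_cmult_indicator)
  also have "\<dots> \<le> ennreal (A powr t * m)"
    using S(2) m by (simp add: ennreal_mult mult_left_mono)
  finally have "Lnorm \<theta> f \<le> ennreal ((A powr t * m) powr (1 / t))"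
    unfolding Lnorm_def using real t A m by (simp add: ennpowr_mono[THEN order_trans] ennpowr_ennreal)
  also have "(A powr t * m) powr (1 / t) = A * m powr recip \<theta>"
    using A m t real by (simp add: powr_mult powr_powr recip_def)
  finally show ?thesis .
qed (use \<theta> in simp)

lemma level_set_subset_scaling:
  fixes F :: "'a \<Rightarrow> 'b::real_normed_vector" and E :: "real \<Rightarrow> 'a set" and \<rho> :: "'a \<Rightarrow> real"
  assumes b: "0 < b" and t: "0 < t"
    and E: "\<And>R R'. 0 < R \<Longrightarrow> R \<le> R' \<Longrightarrow> E R \<subseteq> E R'"
    and F: "\<And>p. F p \<noteq> 0 \<Longrightarrow> 0 < \<rho> p \<and> p \<in> E (\<rho> p) \<and> norm (F p) \<le> W * \<rho> p powr (- b)"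
  shows "{x. t < norm (F x)} \<subseteq> E ((W / t) powr (1 / b))"
proof
  fix x
  assume "x \<in> {x. t < norm (F x)}"
  then have Fx: "t < norm (F x)" by simp
  then have "F x \<noteq> 0" using t by auto
  then have \<rho>: "0 < \<rho> x" "x \<in> E (\<rho> x)" "norm (F x) \<le> W * \<rho> x powr (- b)"
    using F by blast+
  have "t * \<rho> x powr b < norm (F x) * \<rho> x powr b"
    using Fx \<rho>(1) by simp
  also have "\<dots> \<le> W"
    using \<rho>(1,3) by (simp add: powr_minus field_simps)
  finally have "\<rho> x powr b < W / t"
    using t by (simp add: field_simps)
  then have "\<rho> x < (W / t) powr (1 / b)"
    using b \<rho>(1) powr_less_mono2[of "1 / b" "\<rho> x powr b" "W / t"] by (simp add: powr_powr)
  then show "x \<in> E ((W / t) powr (1 / b))"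
    using E[OF \<rho>(1)] \<rho>(2) by (meson less_imp_le subsetD)
qed

lemma wLnorm_le_scaling:
  fixes F :: "'a::euclidean_space \<Rightarrow> 'b::real_normed_vector"
    and E :: "real \<Rightarrow> 'a set" and \<rho> :: "'a \<Rightarrow> real"
  assumes Q: "0 < Q" and b: "0 < b" and V: "0 \<le> V" and W: "0 \<le> W"
    and E: "\<And>R. E R \<in> sets lborel" "\<And>R. 0 < R \<Longrightarrow> emeasure lborel (E R) \<le> ennreal (V * R powr Q)"
      "\<And>R R'. 0 < R \<Longrightarrow> R \<le> R' \<Longrightarrow> E R \<subseteq> E R'"
    and F: "\<And>p. F p \<noteq> 0 \<Longrightarrow> 0 < \<rho> p \<and> p \<in> E (\<rho> p) \<and> norm (F p) \<le> W * \<rho> p powr (- b)"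
  shows "wLnorm (Q / b) F \<le> ennreal (V powr (b / Q) * W)"
  unfolding wLnorm_def
proof (rule SUP_least)
  fix t :: real
  assume "t \<in> {0<..}"
  then have t: "0 < t" by simp
  show "ennreal t * ennpowr (emeasure lborel {x. t < norm (F x)}) (1 / (Q / b)) \<le> ennreal (V powr (b / Q) * W)"
  proof (cases "W = 0")
    case True
    then have "{x. t < norm (F x)} = {}"
      using F t by (force simp: not_less)
    then show ?thesis using Q b by (simp add: ennpowr_def)
  next
    case False
    define R where "R = (W / t) powr (1 / b)"
    have R: "0 < R" using False W t by (simp add: R_def)
    have "emeasure lborel {x. t < norm (F x)} \<le> ennreal (V * R powr Q)"
      using emeasure_mono[OF level_set_subset_scaling[OF b t E(3) F] E(1)] E(2)[OF R]
      unfolding R_def by (rule order_trans)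
    then have "ennpowr (emeasure lborel {x. t < norm (F x)}) (b / Q) \<le> ennreal ((V * R powr Q) powr (b / Q))"
      using Q b V by (auto intro: order_trans[OF ennpowr_mono] simp: ennpowr_ennreal)
    also have "(V * R powr Q) powr (b / Q) = V powr (b / Q) * (W / t)"
      using V R Q b W t by (simp add: R_def powr_mult powr_powr)
    finally have "ennreal t * ennpowr (emeasure lborel {x. t < norm (F x)}) (b / Q)
        \<le> ennreal t * ennreal (V powr (b / Q) * (W / t))"
      by (rule mult_left_mono) simp
    also have "\<dots> = ennreal (V powr (b / Q) * W)"
      using t V W by (simp add: ennreal_mult[symmetric])
    finally show ?thesis using Q b by simp
  qed
qed

lemma norm_integral_le_support:
  fixes f :: "real \<Rightarrow> 'b::banach"
  assumes "\<And>r. r \<in> {0..\<tau>} \<Longrightarrow> f r \<noteq> 0 \<Longrightarrow> l \<le> r \<and> r \<le> u \<and> norm (f r) \<le> K"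
    and "l \<le> u" "0 \<le> K"
  shows "norm (integral {0..\<tau>} f) \<le> K * (u - l)"
proof (cases "f integrable_on {0..\<tau>}")
  case True
  let ?g = "\<lambda>r. if r \<in> {l..u} then K else 0"
  have "norm (integral {0..\<tau>} f) \<le> integral {0..\<tau>} ?g"
  proof (rule integral_norm_bound_integral[OF True])
    show "?g integrable_on {0..\<tau>}"
      using integrable_restrict_Int[of "{l..u}" "\<lambda>_. K" "{0..\<tau>}"] by auto
    show "norm (f r) \<le> ?g r" if "r \<in> {0..\<tau>}" for r
      using assms(1)[OF that] assms(3) by (cases "f r = 0") auto
  qed
  also have "\<dots> = integral ({l..u} \<inter> {0..\<tau>}) (\<lambda>_. K)"
    by (rule integral_restrict_Int)
  also have "\<dots> = integral {max l 0..min u \<tau>} (\<lambda>_. K)"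
    by (simp add: Int_atLeastAtMost)
  also have "\<dots> \<le> (u - l) * K"
    using assms(2,3) by (auto simp: content_real_if min_def max_def intro!: mult_right_mono)
  finally show ?thesis by (simp add: mult.commute)
qed (use assms in \<open>simp add: not_integrable_integral\<close>)

lemma Lnorm_kernel_estimate:
  fixes D :: "real \<Rightarrow> 'n::finite pt \<Rightarrow> 'b::real_normed_vector" and \<beta> :: real
  defines "Q \<equiv> Qdim CARD('n) \<beta>"
  assumes D: "kernel_estimate \<beta> h Q C D" and \<beta>: "1 \<le> \<beta>"
    and V: "0 < V" "\<And>\<rho>. 0 < \<rho> \<Longrightarrow> emeasure lborel (diff_box \<beta> \<rho> h) \<le> ennreal (V * \<rho> powr Q)"
    and r: "0 < r" and s: "0 < s" "s \<le> 1" and \<theta>: "1 \<le> \<theta>"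
    and meas: "\<theta> = \<infinity> \<Longrightarrow> D r \<in> borel_measurable lborel"
  shows "Lnorm \<theta> (D r) \<le> ennreal (C * (V * 2 powr Q) powr recip \<theta> * norm h powr s * r powr (Q * (recip \<theta> - 1) - \<beta> * s))"
proof -
  define A where "A = C * norm h powr s * r powr (- Q - \<beta> * s)"
  have C: "0 \<le> C" by (rule kernel_estimateD(1)[OF D])
  have "norm (D r p) \<le> A * indicator (diff_box \<beta> (2 * r) h) p" for p
  proof (cases "D r p = 0")
    case False
    note supp = kernel_estimateD(2-4)[OF D less_imp_le[OF r] False]
    have "diff_box \<beta> (- fst p) h \<subseteq> diff_box \<beta> (2 * r) h"
      using supp(1,2) r \<beta> by (intro diff_box_mono) auto
    then have "p \<in> diff_box \<beta> (2 * r) h" using supp(3) by blast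
    then show ?thesis
      using kernel_estimate_le_powr[OF D r s, of p] by (simp add: A_def)
  qed (use C in \<open>simp add: A_def\<close>)
  then have "Lnorm \<theta> (D r) \<le> ennreal (A * (V * (2 * r) powr Q) powr recip \<theta>)"
    by (rule Lnorm_le_indicator[OF _ diff_box_sets]) (use V r C \<theta> meas in \<open>auto simp: A_def\<close>)
  also have "A * (V * (2 * r) powr Q) powr recip \<theta>
      = C * (V * 2 powr Q) powr recip \<theta> * norm h powr s * r powr (Q * (recip \<theta> - 1) - \<beta> * s)"
    using V r by (simp add: A_def powr_mult powr_powr powr_add[symmetric] algebra_simps)
  finally show ?thesis .
qed

lemma norm_integral_kernel_estimate:
  fixes D :: "real \<Rightarrow> 'n::finite pt \<Rightarrow> 'b::banach"
  assumes D: "kernel_estimate \<beta> h a C D" and s: "0 < s" "s \<le> 1"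
    and b: "b = a - 1 + \<beta> * s" "0 < b"
    and nz: "integral {0..\<tau>} (\<lambda>r. D r p) \<noteq> 0"
  shows "0 < - fst p" "p \<in> diff_box \<beta> (- fst p) h"
    and "norm (integral {0..\<tau>} (\<lambda>r. D r p)) \<le> C * 2 powr b * norm h powr s * (- fst p) powr (- b)"
proof -
  define \<rho> where "\<rho> = - fst p"
  obtain r0 where r0: "r0 \<in> {0..\<tau>}" "D r0 p \<noteq> 0"
    using nz integral_cong[of "{0..\<tau>}" "\<lambda>r. D r p" "\<lambda>_. 0"] by auto
  note supp = kernel_estimateD(2-4)[OF D _ r0(2)]
  show \<rho>: "0 < - fst p" "p \<in> diff_box \<beta> (- fst p) h"
    using supp r0(1) by auto
  define K where "K = C * norm h powr s * (\<rho> / 2) powr (- a - \<beta> * s)"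
  have C: "0 \<le> C" by (rule kernel_estimateD(1)[OF D])
  have "norm (integral {0..\<tau>} (\<lambda>r. D r p)) \<le> K * (\<rho> - \<rho> / 2)"
  proof (rule norm_integral_le_support)
    fix r assume r: "r \<in> {0..\<tau>}" "D r p \<noteq> 0"
    have r_\<rho>: "\<rho> / 2 \<le> r" "r \<le> \<rho>" "0 < r"
      using kernel_estimateD(2,3)[OF D _ r(2)] r(1) by (auto simp: \<rho>_def)
    have "norm (D r p) \<le> C * norm h powr s * r powr (- a - \<beta> * s)"
      by (rule kernel_estimate_le_powr[OF D r_\<rho>(3) s])
    also have "\<dots> \<le> K"
      unfolding K_def using C r_\<rho> b \<rho>
      by (intro mult_left_mono powr_mono2') (auto simp: \<rho>_def)
    finally show "\<rho> / 2 \<le> r \<and> r \<le> \<rho> \<and> norm (D r p) \<le> K"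
      using r_\<rho> by simp
  qed (use \<rho> C in \<open>auto simp: \<rho>_def K_def\<close>)
  also have "K * (\<rho> - \<rho> / 2) = C * norm h powr s * ((\<rho> / 2) * (\<rho> / 2) powr (- a - \<beta> * s))"
    by (simp add: K_def field_simps)
  also have "(\<rho> / 2) * (\<rho> / 2) powr (- a - \<beta> * s) = (\<rho> / 2) powr (- b)"
  proof -
    have e: "1 + (- a - \<beta> * s) = - b" using b(1) by simp
    have "(\<rho> / 2) * (\<rho> / 2) powr (- a - \<beta> * s) = (\<rho> / 2) powr (1 + (- a - \<beta> * s))"
      by (rule powr_mult_base) (use \<rho> in \<open>simp add: \<rho>_def\<close>)
    then show ?thesis by (simp only: e)
  qed
  also have "(\<rho> / 2) powr (- b) = 2 powr b * \<rho> powr (- b)"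
    using \<rho>(1) unfolding \<rho>_def[symmetric] by (simp add: powr_divide powr_minus_divide)
  also have "C * norm h powr s * (2 powr b * \<rho> powr (- b)) = C * 2 powr b * norm h powr s * (- fst p) powr (- b)"
    by (simp add: \<rho>_def)
  finally show "norm (integral {0..\<tau>} (\<lambda>r. D r p)) \<le> C * 2 powr b * norm h powr s * (- fst p) powr (- b)" .
qed

lemma Qdim_ge:
  assumes "1 \<le> \<beta>" "0 < d"
  shows "2 * \<beta> \<le> Qdim d \<beta>"
proof -
  have "(2 * \<beta> - 1) * 1 \<le> (2 * \<beta> - 1) * real d"
    using assms by (intro mult_left_mono) auto
  then show ?thesis by (simp add: Qdim_def)
qed

lemma Lnorm_delta_y_bound:
  fixes J :: "real \<Rightarrow> 'n::finite pt \<Rightarrow> 'b::real_normed_vector" and \<beta> :: real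
  defines "Q \<equiv> Qdim CARD('n) \<beta>"
  assumes \<beta>: "1 \<le> \<beta>" and est: "\<exists>C. \<forall>h. kernel_estimate \<beta> h Q C (\<lambda>r. delta_y h (J r))"
    and meas: "\<And>r h. 0 < r \<Longrightarrow> delta_y h (J r) \<in> borel_measurable lborel"
  shows "\<forall>\<theta>::ereal. 1 \<le> \<theta> \<longrightarrow> (\<forall>s\<in>{0<..<1::real}. \<exists>C. \<forall>r>0. \<forall>h::real^'n.
           Lnorm \<theta> (delta_y h (J r)) \<le> ennreal (C * norm h powr s * r powr (Q * (recip \<theta> - 1) - \<beta> * s)))"
proof (intro allI impI ballI)
  fix \<theta> :: ereal and s :: real
  assume \<theta>: "1 \<le> \<theta>" and s: "s \<in> {0<..<1}"
  obtain C where C: "\<And>h. kernel_estimate \<beta> h Q C (\<lambda>r. delta_y h (J r))" using est by blast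
  obtain V where V: "0 < V" "\<And>\<rho> h. 0 < \<rho> \<Longrightarrow> emeasure lborel (diff_box \<beta> \<rho> (h::real^'n)) \<le> ennreal (V * \<rho> powr Q)"
    using emeasure_diff_box_le[OF \<beta>] unfolding Q_def by blast
  show "\<exists>C. \<forall>r>0. \<forall>h::real^'n.
      Lnorm \<theta> (delta_y h (J r)) \<le> ennreal (C * norm h powr s * r powr (Q * (recip \<theta> - 1) - \<beta> * s))"
    using Lnorm_kernel_estimate[OF C[unfolded Q_def] \<beta> V(1) V(2)[unfolded Q_def] _ _ _ \<theta> meas] s
    unfolding Q_def by (intro exI[of _ "C * (V * 2 powr Q) powr recip \<theta>"]) (auto simp: Q_def)
qed

lemma wLnorm_integral_delta_y_bound:
  fixes J :: "real \<Rightarrow> 'n::finite pt \<Rightarrow> 'b::banach" and \<beta> :: real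
  defines "Q \<equiv> Qdim CARD('n) \<beta>"
  assumes \<beta>: "1 \<le> \<beta>" and est: "\<exists>C. \<forall>h. kernel_estimate \<beta> h a C (\<lambda>r. delta_y h (J r))"
    and s: "0 < s" "s \<le> 1" and b: "b = a - 1 + \<beta> * s" "0 < b"
  shows "\<exists>C. \<forall>\<tau> h. wLnorm (Q / b) (\<lambda>p. integral {0..\<tau>} (\<lambda>r. delta_y h (J r) p)) \<le> ennreal (C * norm h powr s)"
proof -
  obtain C where C: "\<And>h. kernel_estimate \<beta> h a C (\<lambda>r. delta_y h (J r))" using est by blast
  obtain V where V: "0 < V" "\<And>\<rho> h. 0 < \<rho> \<Longrightarrow> emeasure lborel (diff_box \<beta> \<rho> (h::real^'n)) \<le> ennreal (V * \<rho> powr Q)"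
    using emeasure_diff_box_le[OF \<beta>] unfolding Q_def by blast
  have Q: "0 < Q" using Qdim_ge[OF \<beta>, of "CARD('n)"] \<beta> by (simp add: Q_def)
  have "wLnorm (Q / b) (\<lambda>p. integral {0..\<tau>} (\<lambda>r. delta_y h (J r) p))
      \<le> ennreal (V powr (b / Q) * (C * 2 powr b * norm h powr s))" for \<tau> h
  proof (rule wLnorm_le_scaling[OF Q b(2) less_imp_le[OF V(1)], where E = "\<lambda>R. diff_box \<beta> R h" and \<rho> = "\<lambda>p. - fst p"])
    show "0 < - fst p \<and> p \<in> diff_box \<beta> (- fst p) h \<and>
        norm (integral {0..\<tau>} (\<lambda>r. delta_y h (J r) p)) \<le> C * 2 powr b * norm h powr s * (- fst p) powr (- b)"
      if "integral {0..\<tau>} (\<lambda>r. delta_y h (J r) p) \<noteq> 0" for p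
      using norm_integral_kernel_estimate[OF C s b that] by blast
  qed (use kernel_estimateD(1)[OF C] V(2) \<beta> in \<open>simp_all add: diff_box_sets[unfolded sets_lborel] diff_box_mono\<close>)
  then show ?thesis by (intro exI[of _ "V powr (b / Q) * C * 2 powr b"]) (simp add: ac_simps)
qed

lemma common_bound3:
  fixes A B D :: "'a \<Rightarrow> 'b \<Rightarrow> ennreal"
  assumes "\<exists>C. \<forall>x y. A x y \<le> ennreal (C * g y)" "\<exists>C. \<forall>x y. B x y \<le> ennreal (C * g y)"
    "\<exists>C. \<forall>x y. D x y \<le> ennreal (C * g y)" "\<And>y. 0 \<le> g y"
  shows "\<exists>C. \<forall>x y. A x y \<le> ennreal (C * g y) \<and> B x y \<le> ennreal (C * g y) \<and> D x y \<le> ennreal (C * g y)"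
proof -
  obtain C1 C2 C3 where C: "\<And>x y. A x y \<le> ennreal (C1 * g y)" "\<And>x y. B x y \<le> ennreal (C2 * g y)"
    "\<And>x y. D x y \<le> ennreal (C3 * g y)"
    using assms(1-3) by metis
  define M where "M = max C1 (max C2 C3)"
  have "ennreal (C1 * g y) \<le> ennreal (M * g y)" "ennreal (C2 * g y) \<le> ennreal (M * g y)"
    "ennreal (C3 * g y) \<le> ennreal (M * g y)" for y
    using assms(4)[of y] by (auto simp: M_def intro!: ennreal_leI mult_right_mono)
  then show ?thesis
    using C by (intro exI[of _ M] allI conjI) (blast intro: order_trans)+
qed

section \<open>The kernels of the bump function\<close>

lemma borel_measurable_delta_y:
  fixes f :: "'n::finite pt \<Rightarrow> real"
  assumes "f \<in> borel_measurable borel"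
  shows "delta_y h f \<in> borel_measurable borel"
proof -
  have shift: "(\<lambda>p::'n pt. (fst p, fst (snd p) - h, snd (snd p))) \<in> borel_measurable borel"
    by (intro borel_measurable_continuous_onI continuous_intros)
  have "delta_y h f = (\<lambda>p. f (fst p, fst (snd p) - h, snd (snd p)) - f p)"
    by (auto simp: delta_y_def fun_eq_iff split: prod.splits)
  also have "\<dots> \<in> borel_measurable borel"
    using borel_measurable_diff[OF measurable_compose[OF shift assms] assms] by (simp add: comp_def)
  finally show ?thesis .
qed

lemma Kr_measurable:
  fixes \<psi> :: "'n::finite pt \<Rightarrow> real"
  assumes \<psi>: "continuous_on UNIV \<psi>" and r: "0 < r"
  shows "Kr \<psi> \<beta> r \<in> borel_measurable borel"
proof -
  define P where "P = r powr (2 * \<beta> - 1)"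
  define M where "M = (\<lambda>t. mat2 (- dg2 \<beta> r / P) (t * g2 \<beta> r / P) (dg1 \<beta> r / P) (- t * g1 \<beta> r / P))"
  define E where "E = (\<lambda>p::'n pt. inverse (c0 CARD('n)) * r powr (- Qdim CARD('n) \<beta>) * (fst p / r) ^ CARD('n)
      * \<psi> (fst p / r, blk_app (M (fst p / r)) (snd p)))"
  have Kr: "Kr \<psi> \<beta> r = (\<lambda>p. if p \<in> {p. fst p = 0} then 0 else E p)"
    using r by (auto simp: fun_eq_iff Kr_def E_def M_def P_def Mmat_eq)
  have "continuous_on UNIV E"
    unfolding E_def M_def blk_app_def mat2_nth
    by (intro continuous_intros continuous_on_compose2[OF \<psi> _ subset_UNIV]) (use r in \<open>simp_all add: P_def\<close>)
  then have "E \<in> borel_measurable borel" by (rule borel_measurable_continuous_onI)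
  moreover have "closed {p::'n pt. fst p = 0}"
    by (intro closed_Collect_eq continuous_intros)
  then have "{p::'n pt. fst p = 0} \<inter> space borel \<in> sets borel"
    by (simp add: borel_closed)
  ultimately show ?thesis
    unfolding Kr by (intro measurable_If_set) auto
qed

lemma kernel_estimates_of_bump:
  fixes \<psi> :: "'n::finite pt \<Rightarrow> real"
  assumes \<beta>: "1 \<le> \<beta>" and smooth: "smooth_fun \<psi>"
    and supp: "closure {p. \<psi> p \<noteq> 0} \<subseteq> {-2<..<-1} \<times> ball 0 1 \<times> ball 0 1"
  shows "\<exists>C. \<forall>h. kernel_estimate \<beta> h (Qdim CARD('n) \<beta>) C (\<lambda>r. delta_y h (Kr \<psi> \<beta> r))"
    and "\<exists>C. \<forall>h. kernel_estimate \<beta> h (Qdim CARD('n) \<beta> + \<beta> - 1) C (\<lambda>r. delta_y h (G0r \<psi> \<beta> r))"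
    and "\<exists>C. \<forall>h. kernel_estimate \<beta> h (Qdim CARD('n) \<beta>) C (\<lambda>r. delta_y h (G1r \<psi> \<beta> r))"
    and "\<exists>C. \<forall>h. kernel_estimate \<beta> h (Qdim CARD('n) \<beta> + 2 - \<beta>) C (\<lambda>r. delta_y h (Gvr \<psi> \<beta> r))"
proof -
  define K where "K = closure {p. \<psi> p \<noteq> 0}"
  have Kbox: "K \<subseteq> bump_box"
    using supp by (simp add: K_def bump_box_def)
  then have K: "compact K"
    using bounded_subset[OF bounded_bump_box] by (simp add: compact_eq_bounded_closed K_def)
  have vanish: "\<psi> p = 0" if "p \<notin> K" for p
    using that closure_subset[of "{p. \<psi> p \<noteq> 0}"] unfolding K_def by auto
  then have supp\<psi>: "\<psi> p \<noteq> 0 \<Longrightarrow> p \<in> bump_box" for p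
    using Kbox by blast
  have "grad_x \<psi> p = 0" "grad_v \<psi> p = 0" if "p \<notin> K" for p
    using iterdd_eq_0_outside[OF smooth compact_imp_closed[OF K] vanish that, of "[_]"]
    by (simp_all add: grad_x_def grad_v_def vec_eq_iff)
  then have supp_grad: "grad_x \<psi> p \<noteq> 0 \<Longrightarrow> p \<in> bump_box" "grad_v \<psi> p \<noteq> 0 \<Longrightarrow> p \<in> bump_box" for p
    using Kbox by blast+
  obtain B L where \<psi>: "\<And>p. \<bar>\<psi> p\<bar> \<le> B" "L-lipschitz_on UNIV \<psi>"
    using smooth_fun_compact_support_bounded_lipschitz[OF smooth K vanish] by blast
  have gx_eq: "grad_x \<psi> p $ j = frechet_derivative \<psi> (at p) (0, axis j 1, 0)"
    and gv_eq: "grad_v \<psi> p $ j = frechet_derivative \<psi> (at p) (0, 0, axis j 1)" for p j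
    by (simp_all add: grad_x_def grad_v_def)
  obtain Bx Lx where gx: "\<And>p. norm (grad_x \<psi> p) \<le> Bx" "Lx-lipschitz_on UNIV (grad_x \<psi>)"
    using smooth_fun_derivative_bounded_lipschitz[OF smooth K vanish gx_eq] by blast
  obtain Bv Lv where gv: "\<And>p. norm (grad_v \<psi> p) \<le> Bv" "Lv-lipschitz_on UNIV (grad_v \<psi>)"
    using smooth_fun_derivative_bounded_lipschitz[OF smooth K vanish gv_eq] by blast
  show "\<exists>C. \<forall>h. kernel_estimate \<beta> h (Qdim CARD('n) \<beta>) C (\<lambda>r. delta_y h (Kr \<psi> \<beta> r))"
    and "\<exists>C. \<forall>h. kernel_estimate \<beta> h (Qdim CARD('n) \<beta>) C (\<lambda>r. delta_y h (G1r \<psi> \<beta> r))"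
    using kernel_estimate_Kr_G1r[OF \<beta> \<psi> supp\<psi>] by blast+
  show "\<exists>C. \<forall>h. kernel_estimate \<beta> h (Qdim CARD('n) \<beta> + \<beta> - 1) C (\<lambda>r. delta_y h (G0r \<psi> \<beta> r))"
    by (rule kernel_estimate_G0r[OF \<beta> gx supp_grad(1) gv supp_grad(2)])
  show "\<exists>C. \<forall>h. kernel_estimate \<beta> h (Qdim CARD('n) \<beta> + 2 - \<beta>) C (\<lambda>r. delta_y h (Gvr \<psi> \<beta> r))"
    by (rule kernel_estimate_Gvr[OF \<beta> \<psi> supp\<psi>])
qed

lemma wLnorm_integral_bounds_of_bump:
  fixes \<psi> :: "'n::finite pt \<Rightarrow> real" and \<beta> :: real
  defines "Q \<equiv> Qdim CARD('n) \<beta>"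
  assumes \<beta>: "1 \<le> \<beta>" and smooth: "smooth_fun \<psi>"
    and supp: "closure {p. \<psi> p \<noteq> 0} \<subseteq> {-2<..<-1} \<times> ball 0 1 \<times> ball 0 1"
    and s: "0 < s" "s \<le> 1"
  shows "\<exists>C. \<forall>\<tau> h.
    wLnorm (Q / (Q + \<beta> - 2 + \<beta> * s)) (\<lambda>p. integral {0..\<tau>} (\<lambda>r. delta_y h (G0r \<psi> \<beta> r) p)) \<le> ennreal (C * norm h powr s)
  \<and> wLnorm (Q / (Q - 1 + \<beta> * s)) (\<lambda>p. integral {0..\<tau>} (\<lambda>r. delta_y h (G1r \<psi> \<beta> r) p)) \<le> ennreal (C * norm h powr s)
  \<and> wLnorm (Q / (Q + 1 - \<beta> + \<beta> * s)) (\<lambda>p. integral {0..\<tau>} (\<lambda>r. delta_y h (Gvr \<psi> \<beta> r) p)) \<le> ennreal (C * norm h powr s)"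
proof -
  note est = kernel_estimates_of_bump[OF \<beta> smooth supp]
  have Q: "2 * \<beta> \<le> Q" "0 \<le> \<beta> * s" unfolding Q_def using Qdim_ge[OF \<beta>] s \<beta> by auto
  show ?thesis
    unfolding Q_def
    by (rule common_bound3[OF wLnorm_integral_delta_y_bound[OF \<beta> est(2) s]
          wLnorm_integral_delta_y_bound[OF \<beta> est(3) s] wLnorm_integral_delta_y_bound[OF \<beta> est(4) s]])
       (use Q \<beta> in \<open>auto simp: Q_def\<close>)
qed

theorem lemma2p9:
  fixes \<psi> :: "'n::finite pt \<Rightarrow> real" and \<beta> :: real
  defines "Q \<equiv> Qdim CARD('n) \<beta>"
  assumes beta: "1 < \<beta>"
    and psi_smooth: "smooth_fun \<psi>"
    and psi_nonneg: "\<And>p. 0 \<le> \<psi> p"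
    and psi_mass: "(\<psi> has_integral 1) UNIV"
    and psi_supp: "closure {p. \<psi> p \<noteq> 0} \<subseteq> {-2<..<-1} \<times> ball 0 1 \<times> ball 0 1"
  shows
   "(\<forall>\<theta>::ereal. 1 \<le> \<theta> \<longrightarrow> (\<forall>s\<in>{0<..<1::real}. \<exists>C. \<forall>r>0. \<forall>h::real^'n.
        Lnorm \<theta> (delta_y h (Kr \<psi> \<beta> r))
          \<le> ennreal (C * norm h powr s * r powr (Q * (recip \<theta> - 1) - \<beta> * s))))
    \<and>
    (\<forall>s::real. 0 < s \<and> s < 1/3 \<and> 1 / (1 - s) < \<beta> \<and> \<beta> < 2 / (1 + s) \<longrightarrow>
       (\<exists>C. \<forall>\<tau>>0. \<forall>h::real^'n.
          wLnorm (Q / (Q + \<beta> - 2 + \<beta> * s))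
              (\<lambda>p. integral {0..\<tau>} (\<lambda>r. delta_y h (G0r \<psi> \<beta> r) p)) \<le> ennreal (C * norm h powr s)
        \<and> wLnorm (Q / (Q - 1 + \<beta> * s))
              (\<lambda>p. integral {0..\<tau>} (\<lambda>r. delta_y h (G1r \<psi> \<beta> r) p)) \<le> ennreal (C * norm h powr s)
        \<and> wLnorm (Q / (Q + 1 - \<beta> + \<beta> * s))
              (\<lambda>p. integral {0..\<tau>} (\<lambda>r. delta_y h (Gvr \<psi> \<beta> r) p)) \<le> ennreal (C * norm h powr s)))"
proof -
  have \<beta>: "1 \<le> \<beta>" using beta by simp
  have "delta_y h (Kr \<psi> \<beta> r) \<in> borel_measurable lborel" if "0 < r" for h r
    using borel_measurable_delta_y[OF Kr_measurable[OF smooth_fun_continuous_on[OF psi_smooth] that]] by simp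
  note part_i = Lnorm_delta_y_bound[OF \<beta> kernel_estimates_of_bump(1)[OF \<beta> psi_smooth psi_supp] this]
  note part_ii = wLnorm_integral_bounds_of_bump[OF \<beta> psi_smooth psi_supp]
  show ?thesis
    unfolding Q_def
  proof (intro conjI allI impI, goal_cases)
    case (1 \<theta>)
    then show ?case using part_i by blast
  next
    case (2 s)
    then have "0 < s" "s \<le> 1" by auto
    from part_ii[OF this] show ?case by blast
  qed
qed

end
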